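(* (1) Let $(\mathcal A_n,\varphi_n)_{n\in\mathbb N_0}$ with coface operators $\delta^k\colon(\mathcal A_{n-1},\varphi_{n-1})\to(\mathcal A_n,\varphi_n)$ ($k=0,\dots,n$) be an SCO in the category of noncommutative probability spaces. Let $(\mathcal A_\infty,\varphi_\infty)$ be the inductive limit of the filtration $\mathcal A_0\xrightarrow{\delta^1}\mathcal A_1\xrightarrow{\delta^2}\mathcal A_2\to\cdots$ with canonical morphisms $\mu_n\colon\mathcal A_n\to\mathcal A_\infty$, and let $\alpha_0\colon\mathcal A_\infty\to\mathcal A_\infty$ be the unique morphism with $\alpha_0\mu_{n-1}=\mu_n\delta^0$ for all $n\in\mathbb N$. Put $\iota_0:=\mu_0\colon\mathcal A_0\to\mathcal A_\infty$ and $\iota_N:=(\alpha_0)^N\iota_0$ for $N\in\mathbb N_0$. Then $(\iota_N)_{N\in\mathbb N_0}$ is spreadable (with respect to $\varphi_\infty$). (2) Let $\mathcal B$ be a unital algebra, $(\mathcal A,\varphi)$ a noncommutative probability space and $\iota_N\colon\mathcal B\to\mathcal A$ ($N\in\mathbb N_0$) unital homomorphisms; let $\mathcal A^f=*_{N=0}^\infty\mathcal B$ with canonical embeddings $\lambda_N$, $\pi\colon\mathcal A^f\to\mathcal A$ the unital homomorphism with $\pi\lambda_N=\iota_N$, and $\varphi^f:=\varphi\circ\pi$. Consider: (a) $(\iota_N)_{N\in\mathbb N_0}$ is spreadable. (b) Let $\mathcal A^f_n$ be the unital subalgebra generated by $\lambda_0(\mathcal B),\dots,\lambda_n(\mathcal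 B)$ and $\varphi^f_n$ the restriction of $\varphi^f$ to it. For $n\in\mathbb N$, $0\le k\le n$, the unital homomorphisms $\delta^k\colon\mathcal A^f_{n-1}\to\mathcal A^f_n$ determined by $\delta^k(\lambda_N(b))=\lambda_N(b)$ if $N<k$ and $\delta^k(\lambda_N(b))=\lambda_{N+1}(b)$ if $N\ge k$ ($b\in\mathcal B$, $0\le N\le n-1$) satisfy $\varphi^f_n\circ\delta^k=\varphi^f_{n-1}$, so that $(\mathcal A^f_n,\varphi^f_n)_{n\in\mathbb N_0}$ with these coface operators is an SCO in the category of noncommutative probability spaces. (c) Let $\mathcal A_n$ be the unital subalgebra of $\mathcal A$ generated by $\iota_0(\mathcal B),\dots,\iota_n(\mathcal B)$ and $\varphi_n$ the restriction of $\varphi$ to it. For all $n\in\mathbb N$, $0\le k\le n$ there exist unital homomorphisms $\delta^k\colon\mathcal A_{n-1}\to\mathcal A_n$ with $\delta^k(\iota_N(b))=\iota_N(b)$ if $N<k$ and $\delta^k(\iota_N(b))=\iota_{N+1}(b)$ if $N\ge k$ ($b\in\mathcal B$), satisfying $\varphi_n\circ\delta^k=\varphi_{n-1}$, such that $(\mathcal A_n,\varphi_n)_{n\in\mathbb N_0}$ with these coface operators is an SCO in the category of noncommutative probability spaces. Then (a) $\Leftrightarrow$ (b), and (c) $\Rightarrow$ (a).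
   Context: The category of noncommutative probability spaces has objects $(\mathcal A,\varphi)$ with $\mathcal A$ a unital associative complex algebra and $\varphi\colon\mathcal A\to\mathbb C$ linear with $\varphi(1)=1$; morphisms $\alpha\colon(\mathcal A,\varphi)\to(\mathcal B,\psi)$ are unital algebra homomorphisms with $\psi\circ\alpha=\varphi$. Inductive limits exist in this category (algebraic direct limit with the induced functional). An SCO in a category is a sequence of objects $F^n$ ($n\in\mathbb N_0$) with morphisms $\delta^k\colon F^{n-1}\to F^n$ ($k=0,\dots,n$) satisfying $\delta^j\delta^i=\delta^i\delta^{j-1}$ for $i<j$. For a sequence of unital homomorphisms $\iota_N\colon\mathcal B\to(\mathcal A,\varphi)$, its distribution is $\varphi^f=\varphi\circ\pi$ on the unital free product $\mathcal A^f=*_{N\ge0}\mathcal B$, where $\pi$ is the unique unital homomorphism with $\pi\circ\lambda_N=\iota_N$; equivalently, the collection of all moments $\varphi(\iota_{N_1}(b_1)\cdots\iota_{N_r}(b_r))$. The sequence is spreadable if for every strictly increasing $i\colon\mathbb N_0\to\mathbb N_0$ the sequence $(\iota_{i(N)})_N$ has the same distribution as $(\iota_N)_N$, i.e. $\varphi(\iota_{N_1}(b_1)\cdots\iota_{N_r}(b_r))=\varphi(\iota_{i(N_1)}(b_1)\cdots\iota_{i(N_r)}(b_r))$ for all $r$, all $N_j\in\mathbb N_0$ (repetitions allowed) and all $b_j\in\mathcal B$. *)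

theory Defs
  imports Complex_Main
begin

record 'a alg =
  alg_carrier :: "'a set"
  alg_add     :: "'a \<Rightarrow> 'a \<Rightarrow> 'a"
  alg_mult    :: "'a \<Rightarrow> 'a \<Rightarrow> 'a"
  alg_smult   :: "complex \<Rightarrow> 'a \<Rightarrow> 'a"
  alg_zero    :: "'a"
  alg_one     :: "'a"

definition unital_algebra :: "'a alg \<Rightarrow> bool" where
  "unital_algebra A \<longleftrightarrow>
     (let C = alg_carrier A; ad = alg_add A; mu = alg_mult A; sm = alg_smult A;
          z = alg_zero A; e = alg_one A in
       z \<in> C \<and> e \<in> C \<and>
       (\<forall>x\<in>C. \<forall>y\<in>C. ad x y \<in> C \<and> mu x y \<in> C) \<and>
       (\<forall>c. \<forall>x\<in>C. sm c x \<in> C) \<and>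
       (\<forall>x\<in>C. \<forall>y\<in>C. \<forall>w\<in>C. ad (ad x y) w = ad x (ad y w)) \<and>
       (\<forall>x\<in>C. \<forall>y\<in>C. ad x y = ad y x) \<and>
       (\<forall>x\<in>C. ad z x = x) \<and>
       (\<forall>x\<in>C. ad x (sm (-1) x) = z) \<and>
       (\<forall>c. \<forall>x\<in>C. \<forall>y\<in>C. sm c (ad x y) = ad (sm c x) (sm c y)) \<and>
       (\<forall>c d. \<forall>x\<in>C. sm (c + d) x = ad (sm c x) (sm d x)) \<and>
       (\<forall>c d. \<forall>x\<in>C. sm c (sm d x) = sm (c * d) x) \<and>
       (\<forall>x\<in>C. sm 1 x = x) \<and>
       (\<forall>x\<in>C. \<forall>y\<in>C. \<forall>w\<in>C. mu (mu x y) w = mu x (mu y w)) \<and>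
       (\<forall>x\<in>C. \<forall>y\<in>C. \<forall>w\<in>C. mu x (ad y w) = ad (mu x y) (mu x w)) \<and>
       (\<forall>x\<in>C. \<forall>y\<in>C. \<forall>w\<in>C. mu (ad x y) w = ad (mu x w) (mu y w)) \<and>
       (\<forall>c. \<forall>x\<in>C. \<forall>y\<in>C. sm c (mu x y) = mu (sm c x) y \<and> sm c (mu x y) = mu x (sm c y)) \<and>
       (\<forall>x\<in>C. mu e x = x \<and> mu x e = x))"

definition ncps :: "'a alg \<Rightarrow> ('a \<Rightarrow> complex) \<Rightarrow> bool" where
  "ncps A \<phi> \<longleftrightarrow> unital_algebra A \<and>
     (\<forall>x\<in>alg_carrier A. \<forall>y\<in>alg_carrier A. \<phi> (alg_add A x y) = \<phi> x + \<phi> y) \<and>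
     (\<forall>c. \<forall>x\<in>alg_carrier A. \<phi> (alg_smult A c x) = c * \<phi> x) \<and>
     \<phi> (alg_one A) = 1"

definition unital_hom :: "'a alg \<Rightarrow> 'b alg \<Rightarrow> ('a \<Rightarrow> 'b) \<Rightarrow> bool" where
  "unital_hom A B f \<longleftrightarrow>
     (\<forall>x\<in>alg_carrier A. f x \<in> alg_carrier B) \<and>
     (\<forall>x\<in>alg_carrier A. \<forall>y\<in>alg_carrier A. f (alg_add A x y) = alg_add B (f x) (f y)) \<and>
     (\<forall>c. \<forall>x\<in>alg_carrier A. f (alg_smult A c x) = alg_smult B c (f x)) \<and>
     (\<forall>x\<in>alg_carrier A. \<forall>y\<in>alg_carrier A. f (alg_mult A x y) = alg_mult B (f x) (f y)) \<and>
     f (alg_one A) = alg_one B"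

definition ncps_mor :: "'a alg \<Rightarrow> ('a \<Rightarrow> complex) \<Rightarrow> 'b alg \<Rightarrow> ('b \<Rightarrow> complex) \<Rightarrow> ('a \<Rightarrow> 'b) \<Rightarrow> bool" where
  "ncps_mor A \<phi> B \<psi> f \<longleftrightarrow> ncps A \<phi> \<and> ncps B \<psi> \<and> unital_hom A B f \<and>
     (\<forall>x\<in>alg_carrier A. \<psi> (f x) = \<phi> x)"

text \<open>\<open>\<delta> n k\<close> is the coface operator \<open>\<delta>\<^sup>k : F\<^sup>n\<^sup>-\<^sup>1 \<rightarrow> F\<^sup>n\<close> (for \<open>n \<ge> 1\<close>, \<open>k \<le> n\<close>);
  equality of morphisms is equality on the carrier of the domain.\<close>
definition sco :: "(nat \<Rightarrow> 'a alg) \<Rightarrow> (nat \<Rightarrow> 'a \<Rightarrow> complex) \<Rightarrow> (nat \<Rightarrow> nat \<Rightarrow> 'a \<Rightarrow> 'a) \<Rightarrow> bool" where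
  "sco A \<phi> \<delta> \<longleftrightarrow>
     (\<forall>n. ncps (A n) (\<phi> n)) \<and>
     (\<forall>n k. 1 \<le> n \<longrightarrow> k \<le> n \<longrightarrow> ncps_mor (A (n - 1)) (\<phi> (n - 1)) (A n) (\<phi> n) (\<delta> n k)) \<and>
     (\<forall>n i j. 1 \<le> n \<longrightarrow> i < j \<longrightarrow> j \<le> n + 1 \<longrightarrow>
        (\<forall>x\<in>alg_carrier (A (n - 1)). \<delta> (n + 1) j (\<delta> n i x) = \<delta> (n + 1) i (\<delta> n (j - 1) x)))"

fun filt_map :: "(nat \<Rightarrow> nat \<Rightarrow> 'a \<Rightarrow> 'a) \<Rightarrow> nat \<Rightarrow> nat \<Rightarrow> 'a \<Rightarrow> 'a" where
  "filt_map \<delta> m 0 = id"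
| "filt_map \<delta> m (Suc k) = \<delta> (m + Suc k) (m + Suc k) \<circ> filt_map \<delta> m k"

text \<open>\<open>(L,\<psi>)\<close> with canonical morphisms \<open>\<mu> n\<close> is (an isomorphic copy of) the algebraic
  direct limit with the induced functional: compatible cocone of ncps morphisms, jointly
  surjective, and \<open>\<mu> n x = \<mu> n y\<close> only if \<open>x, y\<close> become equal at some later stage.\<close>
definition is_inductive_limit ::
  "(nat \<Rightarrow> 'a alg) \<Rightarrow> (nat \<Rightarrow> 'a \<Rightarrow> complex) \<Rightarrow> (nat \<Rightarrow> nat \<Rightarrow> 'a \<Rightarrow> 'a) \<Rightarrow>
   'c alg \<Rightarrow> ('c \<Rightarrow> complex) \<Rightarrow> (nat \<Rightarrow> 'a \<Rightarrow> 'c) \<Rightarrow> bool" where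
  "is_inductive_limit A \<phi> \<delta> L \<psi> \<mu> \<longleftrightarrow>
     ncps L \<psi> \<and>
     (\<forall>n. ncps_mor (A n) (\<phi> n) L \<psi> (\<mu> n)) \<and>
     (\<forall>n. 1 \<le> n \<longrightarrow> (\<forall>x\<in>alg_carrier (A (n - 1)). \<mu> n (\<delta> n n x) = \<mu> (n - 1) x)) \<and>
     alg_carrier L = (\<Union>n. \<mu> n ` alg_carrier (A n)) \<and>
     (\<forall>n. \<forall>x\<in>alg_carrier (A n). \<forall>y\<in>alg_carrier (A n).
        \<mu> n x = \<mu> n y \<longrightarrow> (\<exists>k. filt_map \<delta> n k x = filt_map \<delta> n k y))"

definition mprod :: "'a alg \<Rightarrow> 'a list \<Rightarrow> 'a" where
  "mprod A xs = foldr (alg_mult A) xs (alg_one A)"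

text \<open>Spreadability of \<open>\<iota>\<^sub>N : B \<rightarrow> (A,\<phi>)\<close>, stated via all mixed moments
  \<open>\<phi>(\<iota>\<^sub>N\<^sub>1(b\<^sub>1)\<cdots>\<iota>\<^sub>N\<^sub>r(b\<^sub>r))\<close> (the words \<open>ws = [(N\<^sub>1,b\<^sub>1),\<dots>,(N\<^sub>r,b\<^sub>r)]\<close>).\<close>
definition spreadable :: "'b alg \<Rightarrow> 'a alg \<Rightarrow> ('a \<Rightarrow> complex) \<Rightarrow> (nat \<Rightarrow> 'b \<Rightarrow> 'a) \<Rightarrow> bool" where
  "spreadable B A \<phi> \<iota> \<longleftrightarrow>
     (\<forall>i :: nat \<Rightarrow> nat. strict_mono i \<longrightarrow>
       (\<forall>ws :: (nat \<times> 'b) list. set (map snd ws) \<subseteq> alg_carrier B \<longrightarrow>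
          \<phi> (mprod A (map (\<lambda>(N, b). \<iota> N b) ws)) =
          \<phi> (mprod A (map (\<lambda>(N, b). \<iota> (i N) b) ws))))"

definition subalg :: "'a alg \<Rightarrow> 'a set \<Rightarrow> bool" where
  "subalg A C \<longleftrightarrow> C \<subseteq> alg_carrier A \<and> alg_zero A \<in> C \<and> alg_one A \<in> C \<and>
     (\<forall>x\<in>C. \<forall>y\<in>C. alg_add A x y \<in> C \<and> alg_mult A x y \<in> C) \<and>
     (\<forall>c. \<forall>x\<in>C. alg_smult A c x \<in> C)"

definition subalg_gen :: "'a alg \<Rightarrow> 'a set \<Rightarrow> 'a set" where
  "subalg_gen A S = \<Inter>{C. subalg A C \<and> S \<subseteq> C}"

definition restr_alg :: "'a alg \<Rightarrow> 'a set \<Rightarrow> 'a alg" where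
  "restr_alg A C = A\<lparr>alg_carrier := C\<rparr>"

definition alg_sub :: "'a alg \<Rightarrow> 'a \<Rightarrow> 'a \<Rightarrow> 'a" where
  "alg_sub A x y = alg_add A x (alg_smult A (-1) y)"

definition alg_ideal :: "'a alg \<Rightarrow> 'a set \<Rightarrow> bool" where
  "alg_ideal A J \<longleftrightarrow> J \<subseteq> alg_carrier A \<and> alg_zero A \<in> J \<and>
     (\<forall>x\<in>J. \<forall>y\<in>J. alg_add A x y \<in> J) \<and> (\<forall>c. \<forall>x\<in>J. alg_smult A c x \<in> J) \<and>
     (\<forall>a\<in>alg_carrier A. \<forall>x\<in>J. alg_mult A a x \<in> J \<and> alg_mult A x a \<in> J)"

definition gen_ideal :: "'a alg \<Rightarrow> 'a set \<Rightarrow> 'a set" where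
  "gen_ideal A R = \<Inter>{J. alg_ideal A J \<and> R \<subseteq> J}"

definition qcls :: "'a alg \<Rightarrow> 'a set \<Rightarrow> 'a \<Rightarrow> 'a set" where
  "qcls A J x = {y \<in> alg_carrier A. alg_sub A y x \<in> J}"

definition qrep :: "'a set \<Rightarrow> 'a" where
  "qrep X = (SOME x. x \<in> X)"

definition quot_alg :: "'a alg \<Rightarrow> 'a set \<Rightarrow> 'a set alg" where
  "quot_alg A J =
     \<lparr>alg_carrier = qcls A J ` alg_carrier A,
      alg_add = (\<lambda>X Y. qcls A J (alg_add A (qrep X) (qrep Y))),
      alg_mult = (\<lambda>X Y. qcls A J (alg_mult A (qrep X) (qrep Y))),
      alg_smult = (\<lambda>c X. qcls A J (alg_smult A c (qrep X))),
      alg_zero = qcls A J (alg_zero A),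
      alg_one = qcls A J (alg_one A)\<rparr>"

text \<open>Free unital algebra on the letters \<open>\<nat> \<times> carrier B\<close>: finitely supported complex
  functions on words, with concatenation product.\<close>
definition word_alg :: "'b set \<Rightarrow> ((nat \<times> 'b) list \<Rightarrow> complex) alg" where
  "word_alg S =
     \<lparr>alg_carrier = {f. finite {w. f w \<noteq> 0} \<and> (\<forall>w. f w \<noteq> 0 \<longrightarrow> set (map snd w) \<subseteq> S)},
      alg_add = (\<lambda>f g w. f w + g w),
      alg_mult = (\<lambda>f g w. \<Sum>i\<le>length w. f (take i w) * g (drop i w)),
      alg_smult = (\<lambda>c f w. c * f w),
      alg_zero = (\<lambda>w. 0),
      alg_one = (\<lambda>w. if w = [] then 1 else 0)\<rparr>"

definition letter :: "nat \<Rightarrow> 'b \<Rightarrow> ((nat \<times> 'b) list \<Rightarrow> complex)" where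
  "letter N b = (\<lambda>w. if w = [(N, b)] then 1 else 0)"

text \<open>Relations making each \<open>b \<mapsto> letter N b\<close> a unital algebra homomorphism.\<close>
definition fp_rels :: "'b alg \<Rightarrow> ((nat \<times> 'b) list \<Rightarrow> complex) set" where
  "fp_rels B =
     (let W = word_alg (alg_carrier B) in
      {alg_sub W (letter N (alg_add B b b')) (alg_add W (letter N b) (letter N b')) | N b b'.
          b \<in> alg_carrier B \<and> b' \<in> alg_carrier B} \<union>
      {alg_sub W (letter N (alg_smult B c b)) (alg_smult W c (letter N b)) | N c b.
          b \<in> alg_carrier B} \<union>
      {alg_sub W (letter N (alg_mult B b b')) (alg_mult W (letter N b) (letter N b')) | N b b'.
          b \<in> alg_carrier B \<and> b' \<in> alg_carrier B} \<union>
      {alg_sub W (letter N (alg_one B)) (alg_one W) | N. True})"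

definition free_prod :: "'b alg \<Rightarrow> ((nat \<times> 'b) list \<Rightarrow> complex) set alg" where
  "free_prod B = quot_alg (word_alg (alg_carrier B)) (gen_ideal (word_alg (alg_carrier B)) (fp_rels B))"

definition fp_emb :: "'b alg \<Rightarrow> nat \<Rightarrow> 'b \<Rightarrow> ((nat \<times> 'b) list \<Rightarrow> complex) set" where
  "fp_emb B N b = qcls (word_alg (alg_carrier B)) (gen_ideal (word_alg (alg_carrier B)) (fp_rels B)) (letter N b)"

end

theory Submission
  imports Defs
begin

text \<open>A mixed moment \<open>\<phi>(\<iota>\<^sub>N\<^sub>1(b\<^sub>1)\<cdots>\<iota>\<^sub>N\<^sub>r(b\<^sub>r))\<close> with all \<open>N\<^sub>j \<le> n\<close> is the state of a word in
  the \<open>n\<close>-th algebra of a filtration. Every strictly increasing map \<open>{..n} \<rightarrow> {..m}\<close> is a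
  composite of the maps \<open>skip k\<close> that omit one value, so if state preserving cofaces
  \<open>\<delta>\<^sup>k\<close> act on the generators by \<open>N \<mapsto> skip k N\<close>, their composite carries the word to
  the spread word without changing its state; this gives spreadability in part (1) (the
  copy of \<open>\<iota>\<^sub>N\<close> in \<open>A\<^sub>n\<close> is \<open>\<delta>\<^sup>n\<cdots>\<delta>\<^sup>N\<^sup>+\<^sup>1\<delta>\<^sup>0\<cdots>\<delta>\<^sup>0 A\<^sub>0\<close>, and the cosimplicial identities
  make the cofaces act on it by \<open>skip\<close>) and the implications (b) \<open>\<Rightarrow>\<close> (a) and (c) \<open>\<Rightarrow>\<close> (a).
  For (a) \<open>\<Rightarrow>\<close> (b), the cofaces of the free product are induced by relabelling words; since
  \<open>A\<^sup>f\<^sub>n\<^sub>-\<^sub>1\<close> is spanned by words in the generators, invariance of the state under them is exactly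
  the invariance of the moments under \<open>skip k\<close>, and the cosimplicial identities reduce to
  \<open>skip j \<circ> skip i = skip i \<circ> skip (j - 1)\<close> on generators.\<close>

section \<open>Unital algebras and linear combinations of words\<close>

locale unital_alg =
  fixes A :: "'a alg"
  assumes unital: "unital_algebra A"
begin

lemma zero_closed: "alg_zero A \<in> alg_carrier A"
  using unital by (simp add: unital_algebra_def Let_def)

lemma one_closed: "alg_one A \<in> alg_carrier A"
  using unital by (simp add: unital_algebra_def Let_def)

lemma add_closed: "x \<in> alg_carrier A \<Longrightarrow> y \<in> alg_carrier A \<Longrightarrow> alg_add A x y \<in> alg_carrier A"
  using unital by (simp add: unital_algebra_def Let_def)

lemma mult_closed: "x \<in> alg_carrier A \<Longrightarrow> y \<in> alg_carrier A \<Longrightarrow> alg_mult A x y \<in> alg_carrier A"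
  using unital by (simp add: unital_algebra_def Let_def)

lemma smult_closed: "x \<in> alg_carrier A \<Longrightarrow> alg_smult A c x \<in> alg_carrier A"
  using unital by (simp add: unital_algebra_def Let_def)

lemma add_assoc:
  assumes "x \<in> alg_carrier A" "y \<in> alg_carrier A" "z \<in> alg_carrier A"
  shows "alg_add A (alg_add A x y) z = alg_add A x (alg_add A y z)"
proof -
  from unital have "\<forall>x\<in>alg_carrier A. \<forall>y\<in>alg_carrier A. \<forall>z\<in>alg_carrier A.
      alg_add A (alg_add A x y) z = alg_add A x (alg_add A y z)"
    unfolding unital_algebra_def Let_def by (elim conjE) assumption
  with assms show ?thesis by blast
qed

lemma add_commute: "x \<in> alg_carrier A \<Longrightarrow> y \<in> alg_carrier A \<Longrightarrow> alg_add A x y = alg_add A y x"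
  using unital by (simp add: unital_algebra_def Let_def)

lemma zero_add:
  assumes "x \<in> alg_carrier A"
  shows "alg_add A (alg_zero A) x = x"
proof -
  from unital have "\<forall>x\<in>alg_carrier A. alg_add A (alg_zero A) x = x"
    unfolding unital_algebra_def Let_def by (elim conjE) assumption
  with assms show ?thesis by blast
qed

lemma add_neg: "x \<in> alg_carrier A \<Longrightarrow> alg_add A x (alg_smult A (-1) x) = alg_zero A"
  using unital by (simp add: unital_algebra_def Let_def)

lemma smult_add_right: "x \<in> alg_carrier A \<Longrightarrow> y \<in> alg_carrier A \<Longrightarrow>
    alg_smult A c (alg_add A x y) = alg_add A (alg_smult A c x) (alg_smult A c y)"
  using unital by (simp add: unital_algebra_def Let_def)

lemma smult_add_left: "x \<in> alg_carrier A \<Longrightarrow>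
    alg_smult A (c + d) x = alg_add A (alg_smult A c x) (alg_smult A d x)"
  using unital by (simp add: unital_algebra_def Let_def)

lemma smult_smult: "x \<in> alg_carrier A \<Longrightarrow> alg_smult A c (alg_smult A d x) = alg_smult A (c * d) x"
  using unital by (simp add: unital_algebra_def Let_def)

lemma smult_one: "x \<in> alg_carrier A \<Longrightarrow> alg_smult A 1 x = x"
  using unital by (simp add: unital_algebra_def Let_def)

lemma mult_assoc: "x \<in> alg_carrier A \<Longrightarrow> y \<in> alg_carrier A \<Longrightarrow> z \<in> alg_carrier A \<Longrightarrow>
    alg_mult A (alg_mult A x y) z = alg_mult A x (alg_mult A y z)"
  using unital by (simp add: unital_algebra_def Let_def)

lemma distrib_left: "x \<in> alg_carrier A \<Longrightarrow> y \<in> alg_carrier A \<Longrightarrow> z \<in> alg_carrier A \<Longrightarrow>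
    alg_mult A x (alg_add A y z) = alg_add A (alg_mult A x y) (alg_mult A x z)"
  using unital by (simp add: unital_algebra_def Let_def)

lemma distrib_right: "x \<in> alg_carrier A \<Longrightarrow> y \<in> alg_carrier A \<Longrightarrow> z \<in> alg_carrier A \<Longrightarrow>
    alg_mult A (alg_add A x y) z = alg_add A (alg_mult A x z) (alg_mult A y z)"
  using unital by (simp add: unital_algebra_def Let_def)

lemma smult_mult_left: "x \<in> alg_carrier A \<Longrightarrow> y \<in> alg_carrier A \<Longrightarrow>
    alg_smult A c (alg_mult A x y) = alg_mult A (alg_smult A c x) y"
  using unital by (simp add: unital_algebra_def Let_def)

lemma one_mult: "x \<in> alg_carrier A \<Longrightarrow> alg_mult A (alg_one A) x = x"
  using unital by (simp add: unital_algebra_def Let_def)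

lemma mult_one: "x \<in> alg_carrier A \<Longrightarrow> alg_mult A x (alg_one A) = x"
  using unital by (simp add: unital_algebra_def Let_def)

lemma smult_mult_right:
  assumes "x \<in> alg_carrier A" "y \<in> alg_carrier A"
  shows "alg_smult A c (alg_mult A x y) = alg_mult A x (alg_smult A c y)"
proof -
  from unital have "\<forall>c. \<forall>x\<in>alg_carrier A. \<forall>y\<in>alg_carrier A.
      alg_smult A c (alg_mult A x y) = alg_mult A (alg_smult A c x) y \<and>
      alg_smult A c (alg_mult A x y) = alg_mult A x (alg_smult A c y)"
    unfolding unital_algebra_def Let_def by (elim conjE) assumption
  with assms show ?thesis by blast
qed

lemma add_zero: "x \<in> alg_carrier A \<Longrightarrow> alg_add A x (alg_zero A) = x"
  using add_commute zero_add zero_closed by metis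

lemma smult_zero_left:
  assumes x: "x \<in> alg_carrier A"
  shows "alg_smult A 0 x = alg_zero A"
proof -
  let ?y = "alg_smult A 0 x"
  have y: "?y \<in> alg_carrier A" using smult_closed x .
  have idem: "alg_add A ?y ?y = ?y" using smult_add_left[OF x, of 0 0] by simp
  have "alg_zero A = alg_add A (alg_add A ?y ?y) (alg_smult A (-1) ?y)" using add_neg[OF y] idem by simp
  also have "\<dots> = ?y" using add_assoc[OF y y smult_closed[OF y]] add_neg[OF y] add_zero[OF y] by simp
  finally show ?thesis by simp
qed

lemma smult_zero_right: "alg_smult A c (alg_zero A) = alg_zero A"
  using smult_zero_left[OF zero_closed] smult_smult[OF zero_closed, of c 0] by simp

lemma mult_zero_left: "x \<in> alg_carrier A \<Longrightarrow> alg_mult A (alg_zero A) x = alg_zero A"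
  using smult_mult_left[OF zero_closed, of x 0] smult_zero_left[OF zero_closed]
    smult_zero_left[OF mult_closed[OF zero_closed]] by simp

lemma mult_zero_right: "x \<in> alg_carrier A \<Longrightarrow> alg_mult A x (alg_zero A) = alg_zero A"
  using smult_mult_right[OF _ zero_closed, of x 0] smult_zero_left[OF zero_closed]
    smult_zero_left[OF mult_closed[OF _ zero_closed]] by simp

lemma smult_mult_smult: "x \<in> alg_carrier A \<Longrightarrow> y \<in> alg_carrier A \<Longrightarrow>
    alg_mult A (alg_smult A c x) (alg_smult A d y) = alg_smult A (c * d) (alg_mult A x y)"
  using smult_mult_left[of x "alg_smult A d y" c] smult_mult_right[of x y d]
    smult_smult[of "alg_mult A x y" c d] smult_closed mult_closed by simp

lemma mprod_closed: "set xs \<subseteq> alg_carrier A \<Longrightarrow> mprod A xs \<in> alg_carrier A"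
  by (induction xs) (auto simp: mprod_def one_closed mult_closed)

lemma mprod_append: "set xs \<subseteq> alg_carrier A \<Longrightarrow> set ys \<subseteq> alg_carrier A \<Longrightarrow>
    mprod A (xs @ ys) = alg_mult A (mprod A xs) (mprod A ys)"
  by (induction xs) (auto simp: mprod_def one_mult mult_assoc mprod_closed[unfolded mprod_def])

lemma carrier_subalg: "subalg A (alg_carrier A)"
  unfolding subalg_def using zero_closed one_closed add_closed mult_closed smult_closed by blast

lemma unital_algebra_restr:
  assumes sub: "subalg A C"
  shows "unital_algebra (restr_alg A C)"
proof -
  have C: "x \<in> C \<Longrightarrow> x \<in> alg_carrier A" for x
    using sub by (auto simp: subalg_def)
  show ?thesis
    using sub unfolding unital_algebra_def Let_def restr_alg_def subalg_def
    by (simp add: C add_assoc zero_add add_neg smult_add_right smult_add_left smult_smult smult_one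
        mult_assoc distrib_left distrib_right smult_mult_left smult_mult_right[symmetric] one_mult mult_one)
      (metis C add_commute)
qed

end

definition lincomb :: "'a alg \<Rightarrow> ('g \<Rightarrow> 'a) \<Rightarrow> (complex \<times> 'g list) list \<Rightarrow> 'a" where
  "lincomb A gen cs =
     foldr (\<lambda>(c, w) acc. alg_add A (alg_smult A c (mprod A (map gen w))) acc) cs (alg_zero A)"

definition words_in :: "'g set \<Rightarrow> (complex \<times> 'g list) list \<Rightarrow> bool" where
  "words_in G cs \<longleftrightarrow> (\<forall>p\<in>set cs. set (snd p) \<subseteq> G)"

lemma lincomb_Nil [simp]: "lincomb A gen [] = alg_zero A"
  by (simp add: lincomb_def)

lemma lincomb_Cons [simp]:
  "lincomb A gen ((c, w) # cs) = alg_add A (alg_smult A c (mprod A (map gen w))) (lincomb A gen cs)"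
  by (simp add: lincomb_def)

lemma words_in_Nil [simp]: "words_in G []"
  and words_in_Cons [simp]: "words_in G ((c, w) # cs) \<longleftrightarrow> set w \<subseteq> G \<and> words_in G cs"
  and words_in_append [simp]: "words_in G (cs @ ds) \<longleftrightarrow> words_in G cs \<and> words_in G ds"
  by (auto simp: words_in_def)

lemma lincomb_restr [simp]: "lincomb (restr_alg A C) gen cs = lincomb A gen cs"
  by (simp add: lincomb_def restr_alg_def mprod_def)

lemma lincomb_cong:
  "words_in G cs \<Longrightarrow> (\<And>a. a \<in> G \<Longrightarrow> gen a = gen' a) \<Longrightarrow> lincomb A gen cs = lincomb A gen' cs"
proof (induction cs)
  case (Cons p cs)
  obtain c w where p: "p = (c, w)" by force
  have "map gen w = map gen' w" using Cons.prems p by auto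
  with Cons p show ?case by (simp del: map_eq_conv)
qed simp

lemma lincomb_comp: "lincomb A (gen \<circ> f) cs = lincomb A gen (map (\<lambda>(c, w). (c, map f w)) cs)"
  by (induction cs) (auto simp: comp_def)

definition lincomb_times ::
    "(complex \<times> 'g list) list \<Rightarrow> (complex \<times> 'g list) list \<Rightarrow> (complex \<times> 'g list) list" where
  "lincomb_times cs ds = concat (map (\<lambda>(c, w). map (\<lambda>(e, v). (c * e, w @ v)) ds) cs)"

lemma lincomb_times_Nil [simp]: "lincomb_times [] ds = []"
  and lincomb_times_Cons [simp]:
    "lincomb_times ((c, w) # cs) ds = map (\<lambda>(e, v). (c * e, w @ v)) ds @ lincomb_times cs ds"
  by (simp_all add: lincomb_times_def)

context unital_alg
begin

lemma word_closed: "gen ` G \<subseteq> alg_carrier A \<Longrightarrow> set w \<subseteq> G \<Longrightarrow> mprod A (map gen w) \<in> alg_carrier A"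
  by (rule mprod_closed) auto

lemma lincomb_closed: "gen ` G \<subseteq> alg_carrier A \<Longrightarrow> words_in G cs \<Longrightarrow> lincomb A gen cs \<in> alg_carrier A"
proof (induction cs)
  case (Cons p cs)
  then show ?case by (cases p) (simp add: add_closed smult_closed word_closed)
qed (simp add: zero_closed)

lemma lincomb_append:
  assumes gen: "gen ` G \<subseteq> alg_carrier A" and ds: "words_in G ds"
  shows "words_in G cs \<Longrightarrow> lincomb A gen (cs @ ds) = alg_add A (lincomb A gen cs) (lincomb A gen ds)"
proof (induction cs)
  case Nil
  then show ?case using zero_add lincomb_closed[OF gen ds] by simp
next
  case (Cons p cs)
  then show ?case
    by (cases p) (simp add: add_assoc smult_closed word_closed[OF gen] lincomb_closed[OF gen] ds)
qed

lemma lincomb_smult: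
  assumes gen: "gen ` G \<subseteq> alg_carrier A"
  shows "words_in G cs \<Longrightarrow>
    alg_smult A d (lincomb A gen cs) = lincomb A gen (map (\<lambda>(c, w). (d * c, w)) cs)"
proof (induction cs)
  case Nil
  then show ?case using smult_zero_right by simp
next
  case (Cons p cs)
  then show ?case
    by (cases p) (simp add: smult_add_right smult_smult smult_closed word_closed[OF gen]
        lincomb_closed[OF gen])
qed

lemma lincomb_mult_word:
  assumes gen: "gen ` G \<subseteq> alg_carrier A" and w: "set w \<subseteq> G"
  shows "words_in G ds \<Longrightarrow> alg_mult A (alg_smult A c (mprod A (map gen w))) (lincomb A gen ds)
      = lincomb A gen (map (\<lambda>(e, v). (c * e, w @ v)) ds)"
proof (induction ds)
  case Nil
  then show ?case using mult_zero_right smult_closed word_closed[OF gen w] by simp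
next
  case (Cons p ds)
  obtain e v where p: "p = (e, v)" by force
  have v: "set v \<subseteq> G" and ds: "words_in G ds" using Cons.prems p by simp_all
  have "mprod A (map gen (w @ v)) = alg_mult A (mprod A (map gen w)) (mprod A (map gen v))"
    using mprod_append[of "map gen w" "map gen v"] gen w v by auto
  then show ?case
    using Cons.IH[OF ds] p word_closed[OF gen] w v lincomb_closed[OF gen ds]
    by (simp add: distrib_left smult_closed smult_mult_smult)
qed

lemma lincomb_mult:
  assumes gen: "gen ` G \<subseteq> alg_carrier A" and ds: "words_in G ds"
  shows "words_in G cs \<Longrightarrow> words_in G (lincomb_times cs ds) \<and>
    alg_mult A (lincomb A gen cs) (lincomb A gen ds) = lincomb A gen (lincomb_times cs ds)"
proof (induction cs)
  case Nil
  then show ?case using mult_zero_left lincomb_closed[OF gen ds] by simp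
next
  case (Cons p cs)
  obtain c w where p: "p = (c, w)" by force
  have w: "set w \<subseteq> G" and cs: "words_in G cs" using Cons.prems p by simp_all
  have step: "words_in G (map (\<lambda>(e, v). (c * e, w @ v)) ds)"
    using ds w by (force simp: words_in_def)
  show ?case
    using Cons.IH[OF cs] p step
      distrib_right[OF smult_closed[OF word_closed[OF gen w]] lincomb_closed[OF gen cs] lincomb_closed[OF gen ds]]
      lincomb_mult_word[OF gen w ds] lincomb_append[OF gen _ step]
    by simp
qed

definition lincomb_span :: "('g \<Rightarrow> 'a) \<Rightarrow> 'g set \<Rightarrow> 'a set" where
  "lincomb_span gen G = {lincomb A gen cs | cs. words_in G cs}"

lemma lincomb_span_subalg:
  assumes gen: "gen ` G \<subseteq> alg_carrier A"
  shows "subalg A (lincomb_span gen G)"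
  unfolding subalg_def
proof (intro conjI ballI allI)
  show "lincomb_span gen G \<subseteq> alg_carrier A"
    using lincomb_closed[OF gen] by (auto simp: lincomb_span_def)
  show "alg_zero A \<in> lincomb_span gen G"
    unfolding lincomb_span_def by (rule CollectI, rule exI[of _ "[]"]) simp
  show "alg_one A \<in> lincomb_span gen G"
    unfolding lincomb_span_def
    by (rule CollectI, rule exI[of _ "[(1, [])]"]) (simp add: mprod_def smult_one one_closed add_zero)
  fix x y assume "x \<in> lincomb_span gen G" "y \<in> lincomb_span gen G"
  then obtain cs ds where x: "x = lincomb A gen cs" "words_in G cs" and y: "y = lincomb A gen ds" "words_in G ds"
    by (auto simp: lincomb_span_def)
  show "alg_add A x y \<in> lincomb_span gen G"
    unfolding lincomb_span_def using lincomb_append[OF gen y(2) x(2)] x y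
    by (intro CollectI exI[of _ "cs @ ds"]) simp
  show "alg_mult A x y \<in> lincomb_span gen G"
    unfolding lincomb_span_def using lincomb_mult[OF gen y(2) x(2)] x y by blast
next
  fix c x assume "x \<in> lincomb_span gen G"
  then obtain cs where x: "x = lincomb A gen cs" "words_in G cs" by (auto simp: lincomb_span_def)
  moreover have "words_in G (map (\<lambda>(e, w). (c * e, w)) cs)"
    using x(2) by (force simp: words_in_def)
  ultimately show "alg_smult A c x \<in> lincomb_span gen G"
    unfolding lincomb_span_def using lincomb_smult[OF gen x(2), of c] by blast
qed

lemma generator_in_lincomb_span:
  assumes gen: "gen ` G \<subseteq> alg_carrier A" and a: "a \<in> G"
  shows "gen a \<in> lincomb_span gen G"
proof -
  have ga: "gen a \<in> alg_carrier A" using gen a by auto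
  have "lincomb A gen [(1, [a])] = gen a"
    by (simp add: mprod_def mult_one[OF ga] smult_one[OF ga] add_zero[OF ga])
  then show ?thesis unfolding lincomb_span_def using a by (intro CollectI exI[of _ "[(1, [a])]"]) simp
qed

lemma subalg_gen_lincomb:
  assumes gen: "gen ` G \<subseteq> alg_carrier A" and x: "x \<in> subalg_gen A (gen ` G)"
  obtains cs where "words_in G cs" "x = lincomb A gen cs"
proof -
  have "subalg_gen A (gen ` G) \<subseteq> lincomb_span gen G"
    unfolding subalg_gen_def
    using lincomb_span_subalg[OF gen] generator_in_lincomb_span[OF gen] by blast
  then show ?thesis using x that by (auto simp: lincomb_span_def)
qed

end

lemma subalg_gen_incl: "S \<subseteq> subalg_gen A S"
  unfolding subalg_gen_def by blast

lemma subalg_Inter: "\<C> \<noteq> {} \<Longrightarrow> (\<And>C. C \<in> \<C> \<Longrightarrow> subalg A C) \<Longrightarrow> subalg A (\<Inter>\<C>)"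
  unfolding subalg_def by (intro conjI; blast)

lemma (in unital_alg) subalg_subalg_gen: "S \<subseteq> alg_carrier A \<Longrightarrow> subalg A (subalg_gen A S)"
  unfolding subalg_gen_def using carrier_subalg by (intro subalg_Inter) auto

lemma unital_hom_comp: "unital_hom X Y f \<Longrightarrow> unital_hom Y Z g \<Longrightarrow> unital_hom X Z (g \<circ> f)"
  unfolding unital_hom_def by auto

lemma ncps_mor_comp:
  "ncps_mor X \<phi> Y \<psi> f \<Longrightarrow> ncps_mor Y \<psi> Z \<chi> g \<Longrightarrow> ncps_mor X \<phi> Z \<chi> (g \<circ> f)"
  unfolding ncps_mor_def unital_hom_def by auto

lemma ncps_mor_id: "ncps X \<phi> \<Longrightarrow> ncps_mor X \<phi> X \<phi> (\<lambda>x. x)"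
  unfolding ncps_mor_def unital_hom_def by auto

lemma unital_hom_mprod:
  assumes f: "unital_hom X Y f" and X: "unital_algebra X"
  shows "set xs \<subseteq> alg_carrier X \<Longrightarrow> f (mprod X xs) = mprod Y (map f xs)"
proof (induction xs)
  case Nil
  then show ?case using f by (simp add: mprod_def unital_hom_def)
next
  case (Cons x xs)
  then show ?case
    using f unital_alg.mprod_closed[OF unital_alg.intro[OF X], of xs] by (simp add: mprod_def unital_hom_def)
qed

lemma unital_hom_zero:
  assumes f: "unital_hom X Y f" and X: "unital_algebra X" and Y: "unital_algebra Y"
  shows "f (alg_zero X) = alg_zero Y"
proof -
  interpret X: unital_alg X by (rule unital_alg.intro[OF X])
  interpret Y: unital_alg Y by (rule unital_alg.intro[OF Y])
  have "f (alg_zero X) = f (alg_smult X 0 (alg_zero X))" using X.smult_zero_left[OF X.zero_closed] by simp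
  also have "\<dots> = alg_smult Y 0 (f (alg_zero X))" using f X.zero_closed by (simp add: unital_hom_def)
  also have "\<dots> = alg_zero Y" using Y.smult_zero_left f X.zero_closed by (simp add: unital_hom_def)
  finally show ?thesis .
qed

lemma unital_hom_lincomb:
  assumes f: "unital_hom X Y f" and X: "unital_algebra X" and Y: "unital_algebra Y"
    and gen: "gen ` G \<subseteq> alg_carrier X"
  shows "words_in G cs \<Longrightarrow> f (lincomb X gen cs) = lincomb Y (f \<circ> gen) cs"
proof (induction cs)
  case Nil
  then show ?case using unital_hom_zero[OF f X Y] by simp
next
  case (Cons p cs)
  interpret X: unital_alg X by (rule unital_alg.intro[OF X])
  obtain c w where p: "p = (c, w)" by force
  have w: "set w \<subseteq> G" and cs: "words_in G cs" using Cons.prems p by simp_all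
  have "f (mprod X (map gen w)) = mprod Y (map (f \<circ> gen) w)"
    using unital_hom_mprod[OF f X, of "map gen w"] gen w by auto
  then show ?case
    using Cons.IH[OF cs] p f X.word_closed[OF gen w] X.lincomb_closed[OF gen cs] X.smult_closed
    by (simp add: unital_hom_def comp_def)
qed

lemma (in unital_alg) linear_lincomb:
  assumes gen: "gen ` G \<subseteq> alg_carrier A"
    and add: "\<And>x y. x \<in> alg_carrier A \<Longrightarrow> y \<in> alg_carrier A \<Longrightarrow> \<Phi> (alg_add A x y) = \<Phi> x + \<Phi> y"
    and smult: "\<And>c x. x \<in> alg_carrier A \<Longrightarrow> \<Phi> (alg_smult A c x) = c * \<Phi> x"
  shows "words_in G cs \<Longrightarrow>
    \<Phi> (lincomb A gen cs) = (\<Sum>(c, w)\<leftarrow>cs. c * \<Phi> (mprod A (map gen w)))"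
proof (induction cs)
  case Nil
  have "\<Phi> (alg_zero A) = \<Phi> (alg_smult A 0 (alg_zero A))" using smult_zero_left[OF zero_closed] by simp
  then show ?case using smult[OF zero_closed] by simp
next
  case (Cons p cs)
  then show ?case
    by (cases p) (simp add: add smult smult_closed word_closed[OF gen] lincomb_closed[OF gen])
qed

section \<open>Cofaces and spreadability\<close>

definition skip :: "nat \<Rightarrow> nat \<Rightarrow> nat" where
  "skip k N = (if N < k then N else N + 1)"

definition unskip :: "nat \<Rightarrow> nat \<Rightarrow> nat" where
  "unskip k N = (if N < k then N else N - 1)"

lemma unskip_skip [simp]: "unskip k (skip k N) = N"
  by (simp add: skip_def unskip_def)

lemma skip_unskip: "N \<noteq> k \<Longrightarrow> skip k (unskip k N) = N"
  by (auto simp: skip_def unskip_def)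

lemma skip_neq [simp]: "skip k N \<noteq> k"
  by (simp add: skip_def)

lemma strict_mono_skip: "strict_mono (skip k)"
  by (auto simp: strict_mono_def skip_def)

lemma skip_le: "N < n \<Longrightarrow> skip k N \<le> n"
  by (simp add: skip_def)

lemma skip_skip: "i < j \<Longrightarrow> skip j (skip i N) = skip i (skip (j - 1) N)"
  by (auto simp: skip_def)

lemma unskip_less: "x < y \<Longrightarrow> x \<noteq> k \<Longrightarrow> y \<noteq> k \<Longrightarrow> unskip k x < unskip k y"
  by (auto simp: unskip_def)

lemma strict_mono_on_atMost_ge:
  fixes f :: "nat \<Rightarrow> nat"
  assumes "strict_mono_on {..n} f"
  shows "N \<le> n \<Longrightarrow> N \<le> f N"
proof (induction N)
  case (Suc N)
  then have "f N < f (Suc N)" using strict_mono_onD[OF assms] by simp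
  then show ?case using Suc by simp
qed simp

text \<open>The gap \<open>k\<close> lets the map factor through \<open>skip k\<close>.\<close>
lemma strict_mono_on_atMost_gap:
  fixes f :: "nat \<Rightarrow> nat"
  assumes mono: "strict_mono_on {..n} f" and range: "f ` {..n} \<subseteq> {..m}"
    and not_id: "\<not> (m = n \<and> (\<forall>N\<le>n. f N = N))"
  obtains k where "k \<le> m" "\<forall>N\<le>n. f N \<noteq> k"
proof (cases "f n < m")
  case True
  have "f N < m" if "N \<le> n" for N
    using strict_mono_on_less_eq[OF mono, of N n] that True by simp
  then show ?thesis using that by blast
next
  case False
  then have fn: "f n = m" using range by (simp add: image_subset_iff le_antisym)
  have ge: "N \<le> f N" if "N \<le> n" for N using strict_mono_on_atMost_ge[OF mono that] .
  have "\<exists>N. N \<le> n \<and> f N \<noteq> N"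
    using not_id fn by auto
  define k where "k = (LEAST N. N \<le> n \<and> f N \<noteq> N)"
  have k: "k \<le> n" "f k \<noteq> k"
    using LeastI_ex[OF \<open>\<exists>N. N \<le> n \<and> f N \<noteq> N\<close>] unfolding k_def by auto
  have below: "f N = N" if "N < k" for N
    using not_less_Least[of N "\<lambda>N. N \<le> n \<and> f N \<noteq> N"] that k(1) unfolding k_def by simp
  have fk: "k < f k" using ge[OF k(1)] k(2) by simp
  have "f N \<noteq> k" if "N \<le> n" for N
  proof (cases "N < k")
    case False
    then show ?thesis using strict_mono_on_less_eq[OF mono, of k N] that k(1) fk by simp
  qed (use below in simp)
  moreover have "k \<le> m" using ge[OF k(1)] k(1) fn strict_mono_on_less_eq[OF mono, of k n] by simp
  ultimately show ?thesis using that by blast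
qed

text \<open>An SCO-like system of cofaces \<open>d n k : C\<^sub>n\<^sub>-\<^sub>1 \<rightarrow> C\<^sub>n\<close> together with embeddings
  \<open>g n N : B \<rightarrow> C\<^sub>n\<close> (\<open>N \<le> n\<close>) on which the cofaces act by \<open>skip\<close>.\<close>
locale tracked_cofaces =
  fixes C :: "nat \<Rightarrow> 'a alg" and \<psi> :: "nat \<Rightarrow> 'a \<Rightarrow> complex" and d :: "nat \<Rightarrow> nat \<Rightarrow> 'a \<Rightarrow> 'a"
    and B :: "'b alg" and g :: "nat \<Rightarrow> nat \<Rightarrow> 'b \<Rightarrow> 'a"
  assumes coface_mor: "1 \<le> n \<Longrightarrow> k \<le> n \<Longrightarrow> ncps_mor (C (n - 1)) (\<psi> (n - 1)) (C n) (\<psi> n) (d n k)"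
    and coface_gen: "1 \<le> n \<Longrightarrow> k \<le> n \<Longrightarrow> N \<le> n - 1 \<Longrightarrow> b \<in> alg_carrier B \<Longrightarrow>
      d n k (g (n - 1) N b) = g n (skip k N) b"
    and gen_closed: "N \<le> n \<Longrightarrow> b \<in> alg_carrier B \<Longrightarrow> g n N b \<in> alg_carrier (C n)"
begin

lemma ncps: "ncps (C n) (\<psi> n)"
  using coface_mor[of "Suc n" 0] by (simp add: ncps_mor_def)

lemma coface_composite_exists:
  "strict_mono_on {..n} f \<Longrightarrow> f ` {..n} \<subseteq> {..m} \<Longrightarrow>
    \<exists>\<theta>. ncps_mor (C n) (\<psi> n) (C m) (\<psi> m) \<theta> \<and>
      (\<forall>N\<le>n. \<forall>b\<in>alg_carrier B. \<theta> (g n N b) = g m (f N) b)"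
proof (induction m arbitrary: f rule: less_induct)
  case (less m)
  show ?case
  proof (cases "m = n \<and> (\<forall>N\<le>n. f N = N)")
    case True
    then show ?thesis using ncps_mor_id[OF ncps, of n] by (intro exI[of _ "\<lambda>x. x"]) auto
  next
    case False
    then obtain k where k: "k \<le> m" and gap: "\<forall>N\<le>n. f N \<noteq> k"
      using strict_mono_on_atMost_gap[OF less.prems] by blast
    have m: "1 \<le> m" using k gap less.prems(2) by (cases m) force+
    define f' where "f' N = unskip k (f N)" for N
    have f': "f N = skip k (f' N)" if "N \<le> n" for N
      using skip_unskip gap that unfolding f'_def by simp
    have "f' ` {..n} \<subseteq> {..m - 1}"
      using less.prems(2) gap k by (force simp: f'_def unskip_def)
    moreover have "strict_mono_on {..n} f'"
      using strict_mono_onD[OF less.prems(1)] gap unskip_less by (auto intro!: strict_mono_onI simp: f'_def)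
    ultimately obtain \<theta> where \<theta>: "ncps_mor (C n) (\<psi> n) (C (m - 1)) (\<psi> (m - 1)) \<theta>"
        "\<forall>N\<le>n. \<forall>b\<in>alg_carrier B. \<theta> (g n N b) = g (m - 1) (f' N) b"
      using less.IH[of "m - 1" f'] m by auto
    have "f' N \<le> m - 1" if "N \<le> n" for N using \<open>f' ` {..n} \<subseteq> {..m - 1}\<close> that by auto
    then have "\<forall>N\<le>n. \<forall>b\<in>alg_carrier B. (d m k \<circ> \<theta>) (g n N b) = g m (f N) b"
      using \<theta>(2) coface_gen[OF m k] f' by simp
    then show ?thesis using ncps_mor_comp[OF \<theta>(1) coface_mor[OF m k]] m by auto
  qed
qed

lemma spreadable_if_moments:
  fixes A :: "'c alg" and \<phi> and \<iota> :: "nat \<Rightarrow> 'b \<Rightarrow> 'c"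
  assumes moments: "\<And>n ws. set (map snd ws) \<subseteq> alg_carrier B \<Longrightarrow> (\<forall>p\<in>set ws. fst p \<le> n) \<Longrightarrow>
      \<phi> (mprod A (map (\<lambda>(N, b). \<iota> N b) ws)) = \<psi> n (mprod (C n) (map (\<lambda>(N, b). g n N b) ws))"
  shows "spreadable B A \<phi> \<iota>"
  unfolding spreadable_def
proof (intro allI impI)
  fix i :: "nat \<Rightarrow> nat" and ws :: "(nat \<times> 'b) list"
  assume i: "strict_mono i" and ws: "set (map snd ws) \<subseteq> alg_carrier B"
  define n where "n = sum_list (map fst ws)"
  have wn: "\<forall>p\<in>set ws. fst p \<le> n"
    unfolding n_def by (auto intro!: member_le_sum_list) force
  let ?ws' = "map (\<lambda>(N, b). (i N, b)) ws"
  have range: "i ` {..n} \<subseteq> {..i n}" using i by (auto simp: strict_mono_less_eq)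
  obtain \<theta> where \<theta>: "ncps_mor (C n) (\<psi> n) (C (i n)) (\<psi> (i n)) \<theta>"
      "\<forall>N\<le>n. \<forall>b\<in>alg_carrier B. \<theta> (g n N b) = g (i n) (i N) b"
    using coface_composite_exists[OF monotone_on_subset[OF i subset_UNIV] range] by blast
  let ?xs = "map (\<lambda>(N, b). g n N b) ws"
  have xs: "set ?xs \<subseteq> alg_carrier (C n)" using gen_closed wn ws by (fastforce simp: image_subset_iff)
  have hom: "unital_hom (C n) (C (i n)) \<theta>" and alg: "unital_algebra (C n)"
    using \<theta>(1) by (simp_all add: ncps_mor_def ncps_def)
  have "\<theta> (mprod (C n) ?xs) = mprod (C (i n)) (map \<theta> ?xs)"
    using unital_hom_mprod[OF hom alg xs] .
  also have "map \<theta> ?xs = map (\<lambda>(N, b). g (i n) N b) ?ws'"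
    using \<theta>(2) wn ws by (fastforce simp: image_subset_iff)
  finally have \<theta>_word: "\<theta> (mprod (C n) ?xs) = mprod (C (i n)) (map (\<lambda>(N, b). g (i n) N b) ?ws')" .
  have "\<phi> (mprod A (map (\<lambda>(N, b). \<iota> N b) ws)) = \<psi> n (mprod (C n) ?xs)"
    using moments[OF ws wn] .
  also have "\<dots> = \<psi> (i n) (\<theta> (mprod (C n) ?xs))"
    using \<theta>(1) unital_alg.mprod_closed[OF unital_alg.intro[OF alg] xs] by (simp add: ncps_mor_def)
  also have "\<dots> = \<phi> (mprod A (map (\<lambda>(N, b). \<iota> N b) ?ws'))"
  proof -
    have "set (map snd ?ws') \<subseteq> alg_carrier B" using ws by (auto simp: image_subset_iff)
    moreover have "\<forall>p\<in>set ?ws'. fst p \<le> i n" using wn i by (auto simp: strict_mono_less_eq)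
    ultimately show ?thesis using \<theta>_word moments[of ?ws' "i n"] by simp
  qed
  finally show "\<phi> (mprod A (map (\<lambda>(N, b). \<iota> N b) ws)) = \<phi> (mprod A (map (\<lambda>(N, b). \<iota> (i N) b) ws))"
    by (simp add: comp_def case_prod_unfold)
qed

end

section \<open>Spreadability from an SCO\<close>

fun iter_coface0 :: "(nat \<Rightarrow> nat \<Rightarrow> 'a \<Rightarrow> 'a) \<Rightarrow> nat \<Rightarrow> 'a \<Rightarrow> 'a" where
  "iter_coface0 \<delta> 0 b = b"
| "iter_coface0 \<delta> (Suc N) b = \<delta> (Suc N) 0 (iter_coface0 \<delta> N b)"

text \<open>\<open>stage_emb \<delta> n N b\<close> represents \<open>\<iota>\<^sub>N(b) = \<alpha>\<^sub>0\<^sup>N(\<mu>\<^sub>0 b)\<close> in \<open>A\<^sub>n\<close> (for \<open>N \<le> n\<close>):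
  push \<open>b\<close> to \<open>A\<^sub>N\<close> by \<open>\<delta>\<^sup>0\<close> and then along the filtration.\<close>
definition stage_emb :: "(nat \<Rightarrow> nat \<Rightarrow> 'a \<Rightarrow> 'a) \<Rightarrow> nat \<Rightarrow> nat \<Rightarrow> 'a \<Rightarrow> 'a" where
  "stage_emb \<delta> n N b = filt_map \<delta> N (n - N) (iter_coface0 \<delta> N b)"

lemma stage_emb_diag: "stage_emb \<delta> N N b = iter_coface0 \<delta> N b"
  by (simp add: stage_emb_def)

lemma stage_emb_Suc: "N \<le> m \<Longrightarrow> stage_emb \<delta> (Suc m) N b = \<delta> (Suc m) (Suc m) (stage_emb \<delta> m N b)"
  by (simp add: stage_emb_def Suc_diff_le)

locale sco_limit =
  fixes A :: "nat \<Rightarrow> 'a alg" and \<phi> \<delta> and L :: "'c alg" and \<psi> \<mu> \<alpha>0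
  assumes sco: "sco A \<phi> \<delta>"
    and limit: "is_inductive_limit A \<phi> \<delta> L \<psi> \<mu>"
    and shift: "\<forall>n. 1 \<le> n \<longrightarrow> (\<forall>x\<in>alg_carrier (A (n - 1)). \<alpha>0 (\<mu> (n - 1) x) = \<mu> n (\<delta> n 0 x))"
begin

lemma coface_mor: "1 \<le> n \<Longrightarrow> k \<le> n \<Longrightarrow> ncps_mor (A (n - 1)) (\<phi> (n - 1)) (A n) (\<phi> n) (\<delta> n k)"
  using sco by (simp add: sco_def)

lemma coface_closed: "k \<le> Suc m \<Longrightarrow> x \<in> alg_carrier (A m) \<Longrightarrow> \<delta> (Suc m) k x \<in> alg_carrier (A (Suc m))"
  using coface_mor[of "Suc m" k] by (simp add: ncps_mor_def unital_hom_def)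

lemma cosimplicial:
  assumes "i < j" "j \<le> Suc (Suc m)" "x \<in> alg_carrier (A m)"
  shows "\<delta> (Suc (Suc m)) j (\<delta> (Suc m) i x) = \<delta> (Suc (Suc m)) i (\<delta> (Suc m) (j - 1) x)"
proof -
  have "\<forall>n i j. 1 \<le> n \<longrightarrow> i < j \<longrightarrow> j \<le> n + 1 \<longrightarrow>
      (\<forall>x\<in>alg_carrier (A (n - 1)). \<delta> (n + 1) j (\<delta> n i x) = \<delta> (n + 1) i (\<delta> n (j - 1) x))"
    using sco unfolding sco_def by blast
  from this[rule_format, of "Suc m" i j x] assms show ?thesis by simp
qed

lemma mu_mor: "ncps_mor (A n) (\<phi> n) L \<psi> (\<mu> n)"
  using limit by (simp add: is_inductive_limit_def)

lemma iter_coface0_closed: "b \<in> alg_carrier (A 0) \<Longrightarrow> iter_coface0 \<delta> N b \<in> alg_carrier (A N)"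
  by (induction N) (auto intro: coface_closed)

lemma filt_map_closed: "x \<in> alg_carrier (A m) \<Longrightarrow> filt_map \<delta> m k x \<in> alg_carrier (A (m + k))"
  by (induction k) (auto intro: coface_closed)

lemma mu_filt_map: "x \<in> alg_carrier (A m) \<Longrightarrow> \<mu> (m + k) (filt_map \<delta> m k x) = \<mu> m x"
proof (induction k)
  case (Suc k)
  have "\<forall>n. 1 \<le> n \<longrightarrow> (\<forall>x\<in>alg_carrier (A (n - 1)). \<mu> n (\<delta> n n x) = \<mu> (n - 1) x)"
    using limit unfolding is_inductive_limit_def by blast
  from this[rule_format, of "m + Suc k"] filt_map_closed[OF Suc.prems, of k] Suc show ?case by simp
qed simp

lemma alpha0_power_mu0: "b \<in> alg_carrier (A 0) \<Longrightarrow> (\<alpha>0 ^^ N) (\<mu> 0 b) = \<mu> N (iter_coface0 \<delta> N b)"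
proof (induction N)
  case (Suc N)
  then show ?case using shift[rule_format, of "Suc N"] iter_coface0_closed by simp
qed simp

lemma stage_emb_closed: "N \<le> n \<Longrightarrow> b \<in> alg_carrier (A 0) \<Longrightarrow> stage_emb \<delta> n N b \<in> alg_carrier (A n)"
  unfolding stage_emb_def using filt_map_closed[OF iter_coface0_closed, of b N "n - N"] by simp

lemma mu_stage_emb: "N \<le> n \<Longrightarrow> b \<in> alg_carrier (A 0) \<Longrightarrow> (\<alpha>0 ^^ N) (\<mu> 0 b) = \<mu> n (stage_emb \<delta> n N b)"
  unfolding stage_emb_def using mu_filt_map[OF iter_coface0_closed, of b N "n - N"] alpha0_power_mu0 by simp

text \<open>By the cosimplicial identities \<open>\<delta>\<^sup>k \<delta>\<^sup>0 = \<delta>\<^sup>0 \<delta>\<^sup>k\<^sup>-\<^sup>1\<close>, all cofaces except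
  the last one fix the image of \<open>A\<^sub>0\<close> under \<open>\<delta>\<^sup>0 \<cdots> \<delta>\<^sup>0\<close>.\<close>
lemma coface_iter_coface0:
  "b \<in> alg_carrier (A 0) \<Longrightarrow> k \<le> m \<Longrightarrow> \<delta> (Suc m) k (iter_coface0 \<delta> m b) = iter_coface0 \<delta> (Suc m) b"
proof (induction m arbitrary: k)
  case (Suc m)
  show ?case
  proof (cases k)
    case (Suc k')
    have "\<delta> (Suc (Suc m)) k (\<delta> (Suc m) 0 (iter_coface0 \<delta> m b))
        = \<delta> (Suc (Suc m)) 0 (\<delta> (Suc m) k' (iter_coface0 \<delta> m b))"
      using cosimplicial[of 0 k m, OF _ _ iter_coface0_closed] Suc Suc.prems by simp
    then show ?thesis using Suc.IH[of k'] Suc Suc.prems by simp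
  qed simp
qed simp

lemma coface_stage_emb:
  "b \<in> alg_carrier (A 0) \<Longrightarrow> k \<le> Suc m \<Longrightarrow> N \<le> m \<Longrightarrow>
    \<delta> (Suc m) k (stage_emb \<delta> m N b) = stage_emb \<delta> (Suc m) (skip k N) b"
proof (induction m arbitrary: k N)
  case 0
  then show ?case by (cases k) (simp_all add: stage_emb_def skip_def)
next
  case (Suc m)
  consider "k = Suc (Suc m)" | "k \<le> Suc m" "N = Suc m" | "k \<le> Suc m" "N \<le> m"
    using Suc.prems by linarith
  then show ?case
  proof cases
    case 1
    then show ?thesis using Suc.prems stage_emb_Suc[of N "Suc m" \<delta> b] by (simp add: skip_def)
  next
    case 2
    then show ?thesis
      using coface_iter_coface0[OF Suc.prems(1) 2(1)] by (simp add: stage_emb_diag skip_def)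
  next
    case 3
    have "\<delta> (Suc (Suc m)) k (stage_emb \<delta> (Suc m) N b)
        = \<delta> (Suc (Suc m)) k (\<delta> (Suc m) (Suc m) (stage_emb \<delta> m N b))"
      by (simp only: stage_emb_Suc[OF 3(2)])
    also have "\<dots> = \<delta> (Suc (Suc m)) (Suc (Suc m)) (\<delta> (Suc m) k (stage_emb \<delta> m N b))"
      using cosimplicial[of k "Suc (Suc m)" m, OF _ _ stage_emb_closed[OF 3(2) Suc.prems(1)]] 3(1) by simp
    also have "\<dots> = stage_emb \<delta> (Suc (Suc m)) (skip k N) b"
      using Suc.IH[OF Suc.prems(1) 3] stage_emb_Suc[of "skip k N" "Suc m" \<delta> b] 3(2)
      by (simp add: skip_le)
    finally show ?thesis .
  qed
qed

lemma tracked_cofaces: "tracked_cofaces A \<phi> \<delta> (A 0) (stage_emb \<delta>)"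
proof
  fix n k N :: nat and b assume "1 \<le> n" "k \<le> n" "N \<le> n - 1" "b \<in> alg_carrier (A 0)"
  then show "\<delta> n k (stage_emb \<delta> (n - 1) N b) = stage_emb \<delta> n (skip k N) b"
    using coface_stage_emb[of b k "n - 1" N] by simp
qed (use coface_mor stage_emb_closed in auto)

lemma spreadable: "spreadable (A 0) L \<psi> (\<lambda>N. (\<alpha>0 ^^ N) \<circ> \<mu> 0)"
proof (rule tracked_cofaces.spreadable_if_moments[OF tracked_cofaces])
  fix n and ws :: "(nat \<times> 'a) list"
  assume ws: "set (map snd ws) \<subseteq> alg_carrier (A 0)" and wn: "\<forall>p\<in>set ws. fst p \<le> n"
  have alg: "unital_algebra (A n)" and hom: "unital_hom (A n) L (\<mu> n)"
    using mu_mor by (simp_all add: ncps_mor_def ncps_def)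
  let ?xs = "map (\<lambda>(N, b). stage_emb \<delta> n N b) ws"
  have xs: "set ?xs \<subseteq> alg_carrier (A n)" using stage_emb_closed ws wn by (fastforce simp: image_subset_iff)
  have "\<mu> n (mprod (A n) ?xs) = mprod L (map (\<mu> n) ?xs)"
    using unital_hom_mprod[OF hom alg xs] .
  also have "map (\<mu> n) ?xs = map (\<lambda>(N, b). ((\<alpha>0 ^^ N) \<circ> \<mu> 0) b) ws"
    using mu_stage_emb ws wn by (fastforce simp: image_subset_iff)
  finally have "mprod L (map (\<lambda>(N, b). ((\<alpha>0 ^^ N) \<circ> \<mu> 0) b) ws) = \<mu> n (mprod (A n) ?xs)" ..
  then show "\<psi> (mprod L (map (\<lambda>(N, b). ((\<alpha>0 ^^ N) \<circ> \<mu> 0) b) ws)) = \<phi> n (mprod (A n) ?xs)"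
    using mu_mor unital_alg.mprod_closed[OF unital_alg.intro[OF alg] xs] by (simp add: ncps_mor_def)
qed

end

section \<open>The word algebra\<close>

lemma word_alg_simps [simp]:
  "alg_add (word_alg S) = (\<lambda>f g w. f w + g w)"
  "alg_mult (word_alg S) = (\<lambda>f g w. \<Sum>i\<le>length w. f (take i w) * g (drop i w))"
  "alg_smult (word_alg S) = (\<lambda>c f w. c * f w)"
  "alg_zero (word_alg S) = (\<lambda>w. 0)"
  "alg_one (word_alg S) = (\<lambda>w. if w = [] then 1 else 0)"
  by (simp_all add: word_alg_def)

lemma word_alg_carrier:
  "f \<in> alg_carrier (word_alg S) \<longleftrightarrow> finite {w. f w \<noteq> 0} \<and> (\<forall>w. f w \<noteq> 0 \<longrightarrow> set (map snd w) \<subseteq> S)"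
  by (simp add: word_alg_def)

lemma word_alg_carrierD: "f \<in> alg_carrier (word_alg S) \<Longrightarrow> f w \<noteq> 0 \<Longrightarrow> set (map snd w) \<subseteq> S"
  by (simp add: word_alg_carrier)

lemma word_alg_sub: "alg_sub (word_alg S) f g = (\<lambda>w. f w - g w)"
  by (simp add: alg_sub_def)

lemma convolution_nonzero:
  assumes "(\<Sum>i\<le>length w. f (take i w) * g (drop i w)) \<noteq> (0::complex)"
  obtains u v where "w = u @ v" "f u \<noteq> 0" "g v \<noteq> 0"
proof -
  obtain i where "f (take i w) * g (drop i w) \<noteq> 0" using assms sum.neutral by (metis (no_types, lifting))
  then show ?thesis using that[of "take i w" "drop i w"] by auto
qed

lemma word_alg_mult_closed:
  assumes f: "f \<in> alg_carrier (word_alg S)" and g: "g \<in> alg_carrier (word_alg S)"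
  shows "alg_mult (word_alg S) f g \<in> alg_carrier (word_alg S)"
proof -
  let ?h = "\<lambda>w. \<Sum>i\<le>length w. f (take i w) * g (drop i w)"
  have "{w. ?h w \<noteq> 0} \<subseteq> (\<lambda>(u, v). u @ v) ` ({w. f w \<noteq> 0} \<times> {w. g w \<noteq> 0})"
    by (force elim: convolution_nonzero)
  then have "finite {w. ?h w \<noteq> 0}"
    using f g by (auto simp: word_alg_carrier intro: finite_subset)
  moreover have "set (map snd w) \<subseteq> S" if "?h w \<noteq> 0" for w
    using that f g by (elim convolution_nonzero) (auto simp: word_alg_carrier)
  ultimately show ?thesis by (simp add: word_alg_carrier)
qed

lemma word_alg_add_closed:
  assumes f: "f \<in> alg_carrier (word_alg S)" and g: "g \<in> alg_carrier (word_alg S)"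
  shows "alg_add (word_alg S) f g \<in> alg_carrier (word_alg S)"
proof -
  have "{w. f w + g w \<noteq> 0} \<subseteq> {w. f w \<noteq> 0} \<union> {w. g w \<noteq> 0}" by auto
  then have "finite {w. f w + g w \<noteq> 0}" using f g by (auto simp: word_alg_carrier intro: finite_subset)
  moreover have "set (map snd w) \<subseteq> S" if "f w + g w \<noteq> 0" for w
    using that f g by (cases "f w = 0") (auto simp: word_alg_carrier)
  ultimately show ?thesis by (simp add: word_alg_carrier)
qed

lemma word_alg_smult_closed:
  assumes f: "f \<in> alg_carrier (word_alg S)"
  shows "alg_smult (word_alg S) c f \<in> alg_carrier (word_alg S)"
proof -
  have "{w. c * f w \<noteq> 0} \<subseteq> {w. f w \<noteq> 0}" by auto
  then show ?thesis using f by (auto simp: word_alg_carrier intro: finite_subset)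
qed

lemma word_alg_one_closed: "alg_one (word_alg S) \<in> alg_carrier (word_alg S)"
proof -
  have "{w. (if w = [] then 1 else 0) \<noteq> (0::complex)} = {[]}" by auto
  then show ?thesis by (simp add: word_alg_carrier)
qed

lemma convolution_assoc:
  fixes f g h :: "'w list \<Rightarrow> complex"
  shows "(\<Sum>i\<le>length w. (\<Sum>j\<le>length (take i w). f (take j (take i w)) * g (drop j (take i w))) * h (drop i w))
       = (\<Sum>j\<le>length w. f (take j w) * (\<Sum>l\<le>length (drop j w). g (take l (drop j w)) * h (drop l (drop j w))))"
proof -
  let ?n = "length w"
  define G where "G j l = f (take j w) * g (take l (drop j w)) * h (drop l (drop j w))" for j l
  have "(\<Sum>j\<le>length (take i w). f (take j (take i w)) * g (drop j (take i w))) * h (drop i w)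
      = (\<Sum>j\<le>i. G j (i - j))" if "i \<le> ?n" for i
  proof -
    have "(\<Sum>j\<le>length (take i w). f (take j (take i w)) * g (drop j (take i w))) * h (drop i w)
        = (\<Sum>j\<le>i. f (take j (take i w)) * g (drop j (take i w)) * h (drop i w))"
      using that by (simp add: sum_distrib_right min_def)
    also have "\<dots> = (\<Sum>j\<le>i. G j (i - j))"
      by (rule sum.cong) (auto simp: G_def min_def drop_take)
    finally show ?thesis .
  qed
  then have "(\<Sum>i\<le>?n. (\<Sum>j\<le>length (take i w). f (take j (take i w)) * g (drop j (take i w))) * h (drop i w))
      = (\<Sum>i\<le>?n. \<Sum>j\<le>i. G j (i - j))"
    by (intro sum.cong) auto
  also have "\<dots> = (\<Sum>(j, l)\<in>{(j, l). j + l \<le> ?n}. G j l)"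
    using sum.triangle_reindex_eq[of G ?n] by simp
  also have "{(j, l). j + l \<le> ?n} = Sigma {..?n} (\<lambda>j. {..?n - j})" by auto
  also have "(\<Sum>(j, l)\<in>Sigma {..?n} (\<lambda>j. {..?n - j}). G j l) = (\<Sum>j\<le>?n. \<Sum>l\<le>?n - j. G j l)"
    by (subst sum.Sigma) auto
  also have "\<dots> = (\<Sum>j\<le>?n. f (take j w) * (\<Sum>l\<le>length (drop j w). g (take l (drop j w)) * h (drop l (drop j w))))"
    unfolding G_def by (simp add: sum_distrib_left mult.assoc)
  finally show ?thesis .
qed

lemma unital_algebra_word_alg: "unital_algebra (word_alg S)"
  unfolding unital_algebra_def Let_def
proof (intro conjI allI ballI)
  let ?W = "word_alg S"
  show "alg_zero ?W \<in> alg_carrier ?W" by (simp add: word_alg_carrier)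
  show "alg_one ?W \<in> alg_carrier ?W" by (rule word_alg_one_closed)
  fix x y assume x: "x \<in> alg_carrier ?W" and y: "y \<in> alg_carrier ?W"
  show "alg_add ?W x y \<in> alg_carrier ?W" using word_alg_add_closed x y .
  show "alg_mult ?W x y \<in> alg_carrier ?W" using word_alg_mult_closed x y .
  show "alg_add ?W x y = alg_add ?W y x" by (auto simp: add.commute)
  fix z
  show "alg_add ?W (alg_add ?W x y) z = alg_add ?W x (alg_add ?W y z)" by (auto simp: add.assoc)
  show "alg_mult ?W (alg_mult ?W x y) z = alg_mult ?W x (alg_mult ?W y z)"
    using convolution_assoc[where f=x and g=y and h=z] by (simp add: fun_eq_iff)
  show "alg_mult ?W x (alg_add ?W y z) = alg_add ?W (alg_mult ?W x y) (alg_mult ?W x z)"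
    by (simp add: fun_eq_iff distrib_left sum.distrib)
  show "alg_mult ?W (alg_add ?W x y) z = alg_add ?W (alg_mult ?W x z) (alg_mult ?W y z)"
    by (simp add: fun_eq_iff distrib_right sum.distrib)
next
  fix c x assume "x \<in> alg_carrier (word_alg S)"
  then show "alg_smult (word_alg S) c x \<in> alg_carrier (word_alg S)" by (rule word_alg_smult_closed)
next
  fix x :: "(nat \<times> 'a) list \<Rightarrow> complex"
  have "(\<Sum>i\<le>length w. (if take i w = [] then 1 else 0) * x (drop i w)) = x w" for w
    by (subst sum.atMost_shift) auto
  moreover have "(\<Sum>i\<le>length w. x (take i w) * (if drop i w = [] then 1 else 0)) = x w" for w
  proof -
    have "(\<Sum>i\<le>length w. x (take i w) * (if drop i w = [] then 1 else 0))
        = (\<Sum>i\<le>length w. if i = length w then x w else 0)"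
      by (rule sum.cong) auto
    then show ?thesis by simp
  qed
  ultimately show "alg_mult (word_alg S) (alg_one (word_alg S)) x = x"
    "alg_mult (word_alg S) x (alg_one (word_alg S)) = x"
    "alg_add (word_alg S) (alg_zero (word_alg S)) x = x"
    "alg_add (word_alg S) x (alg_smult (word_alg S) (-1) x) = alg_zero (word_alg S)"
    "alg_smult (word_alg S) 1 x = x"
    by (simp_all add: fun_eq_iff)
next
  fix c and x y :: "(nat \<times> 'a) list \<Rightarrow> complex"
  show "alg_smult (word_alg S) c (alg_add (word_alg S) x y)
      = alg_add (word_alg S) (alg_smult (word_alg S) c x) (alg_smult (word_alg S) c y)"
    by (simp add: distrib_left)
  show "alg_smult (word_alg S) c (alg_mult (word_alg S) x y) = alg_mult (word_alg S) (alg_smult (word_alg S) c x) y"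
    by (simp add: fun_eq_iff sum_distrib_left mult.assoc)
  show "alg_smult (word_alg S) c (alg_mult (word_alg S) x y) = alg_mult (word_alg S) x (alg_smult (word_alg S) c y)"
    by (simp add: fun_eq_iff sum_distrib_left mult.left_commute)
next
  fix c d and x :: "(nat \<times> 'a) list \<Rightarrow> complex"
  show "alg_smult (word_alg S) (c + d) x = alg_add (word_alg S) (alg_smult (word_alg S) c x) (alg_smult (word_alg S) d x)"
    by (simp add: distrib_right)
  show "alg_smult (word_alg S) c (alg_smult (word_alg S) d x) = alg_smult (word_alg S) (c * d) x"
    by (simp add: mult.assoc)
qed

section \<open>Quotients of the word algebra\<close>

lemma alg_ideal_Inter: "\<I> \<noteq> {} \<Longrightarrow> (\<And>J. J \<in> \<I> \<Longrightarrow> alg_ideal A J) \<Longrightarrow> alg_ideal A (\<Inter>\<I>)"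
  unfolding alg_ideal_def by (intro conjI; blast)

lemma (in unital_alg) alg_ideal_gen_ideal: "R \<subseteq> alg_carrier A \<Longrightarrow> alg_ideal A (gen_ideal A R)"
proof -
  have "alg_ideal A (alg_carrier A)"
    unfolding alg_ideal_def using zero_closed add_closed smult_closed mult_closed by blast
  then show "R \<subseteq> alg_carrier A \<Longrightarrow> alg_ideal A (gen_ideal A R)"
    unfolding gen_ideal_def by (intro alg_ideal_Inter) auto
qed

lemma gen_ideal_incl: "R \<subseteq> gen_ideal A R"
  unfolding gen_ideal_def by blast

lemma gen_ideal_least: "alg_ideal A I \<Longrightarrow> R \<subseteq> I \<Longrightarrow> gen_ideal A R \<subseteq> I"
  unfolding gen_ideal_def by blast

lemma alg_idealD:
  assumes "alg_ideal A J"
  shows "J \<subseteq> alg_carrier A" "alg_zero A \<in> J"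
    "x \<in> J \<Longrightarrow> y \<in> J \<Longrightarrow> alg_add A x y \<in> J"
    "x \<in> J \<Longrightarrow> alg_smult A c x \<in> J"
    "a \<in> alg_carrier A \<Longrightarrow> x \<in> J \<Longrightarrow> alg_mult A a x \<in> J"
    "a \<in> alg_carrier A \<Longrightarrow> x \<in> J \<Longrightarrow> alg_mult A x a \<in> J"
  using assms unfolding alg_ideal_def by simp_all

lemma unital_homD:
  assumes "unital_hom X Y f"
  shows "x \<in> alg_carrier X \<Longrightarrow> f x \<in> alg_carrier Y"
    "x \<in> alg_carrier X \<Longrightarrow> y \<in> alg_carrier X \<Longrightarrow> f (alg_add X x y) = alg_add Y (f x) (f y)"
    "x \<in> alg_carrier X \<Longrightarrow> f (alg_smult X c x) = alg_smult Y c (f x)"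
    "x \<in> alg_carrier X \<Longrightarrow> y \<in> alg_carrier X \<Longrightarrow> f (alg_mult X x y) = alg_mult Y (f x) (f y)"
    "f (alg_one X) = alg_one Y"
  using assms unfolding unital_hom_def by simp_all

lemma (in unital_alg) unital_hom_gen_ideal:
  assumes h: "unital_hom A A h" and R: "R \<subseteq> alg_carrier A" and hR: "h ` R \<subseteq> R"
  shows "x \<in> gen_ideal A R \<Longrightarrow> h x \<in> gen_ideal A R"
proof -
  let ?J = "gen_ideal A R"
  let ?P = "{x \<in> alg_carrier A. h x \<in> ?J}"
  note J = alg_idealD[OF alg_ideal_gen_ideal[OF R]]
  note hom = unital_homD[OF h]
  have "alg_ideal A ?P"
    unfolding alg_ideal_def
  proof (intro conjI ballI allI)
    show "?P \<subseteq> alg_carrier A" by blast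
    show "alg_zero A \<in> ?P" using J(2) unital_hom_zero[OF h unital unital] zero_closed by simp
  next
    fix x y assume "x \<in> ?P" "y \<in> ?P"
    then show "alg_add A x y \<in> ?P" using J(3) hom(2) add_closed by simp
  next
    fix c x assume "x \<in> ?P"
    then show "alg_smult A c x \<in> ?P" using J(4) hom(3) smult_closed by simp
  next
    fix a x assume "a \<in> alg_carrier A" "x \<in> ?P"
    then show "alg_mult A a x \<in> ?P" "alg_mult A x a \<in> ?P"
      using J(5,6) hom(1,4) mult_closed by simp_all
  qed
  moreover have "R \<subseteq> ?P" using R subset_trans[OF hR gen_ideal_incl] by auto
  ultimately show "x \<in> ?J \<Longrightarrow> h x \<in> ?J" using gen_ideal_least by blast
qed

locale word_quotient =
  fixes S :: "'b set" and J :: "((nat \<times> 'b) list \<Rightarrow> complex) set"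
  assumes ideal: "alg_ideal (word_alg S) J"
begin

abbreviation "W \<equiv> word_alg S"
abbreviation "Q \<equiv> quot_alg W J"
abbreviation "cl \<equiv> qcls W J"

lemma ideal_zero: "(\<lambda>w. 0) \<in> J"
  and ideal_add: "x \<in> J \<Longrightarrow> y \<in> J \<Longrightarrow> (\<lambda>w. x w + y w) \<in> J"
  and ideal_smult: "x \<in> J \<Longrightarrow> (\<lambda>w. c * x w) \<in> J"
  and ideal_mult_left: "a \<in> alg_carrier W \<Longrightarrow> x \<in> J \<Longrightarrow> alg_mult W a x \<in> J"
  and ideal_mult_right: "a \<in> alg_carrier W \<Longrightarrow> x \<in> J \<Longrightarrow> alg_mult W x a \<in> J"
  using ideal unfolding alg_ideal_def by simp_all

lemma ideal_diff: "x \<in> J \<Longrightarrow> y \<in> J \<Longrightarrow> (\<lambda>w. x w - y w) \<in> J"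
  using ideal_add[of x "\<lambda>w. (-1) * y w"] ideal_smult[of y "-1"] by simp

lemma qcls_altdef: "cl x = {y \<in> alg_carrier W. (\<lambda>w. y w - x w) \<in> J}"
  by (simp add: qcls_def word_alg_sub)

lemma qcls_self: "x \<in> alg_carrier W \<Longrightarrow> x \<in> cl x"
  unfolding qcls_altdef using ideal_zero by simp

lemma qcls_eq_iff:
  assumes x: "x \<in> alg_carrier W" and y: "y \<in> alg_carrier W"
  shows "cl x = cl y \<longleftrightarrow> (\<lambda>w. x w - y w) \<in> J"
proof
  assume "cl x = cl y"
  then show "(\<lambda>w. x w - y w) \<in> J" using qcls_self[OF x] unfolding qcls_altdef by blast
next
  assume xy: "(\<lambda>w. x w - y w) \<in> J"
  have "(\<lambda>w. z w - y w) \<in> J \<longleftrightarrow> (\<lambda>w. z w - x w) \<in> J" for z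
    using ideal_add[OF _ xy, of "\<lambda>w. z w - x w"] ideal_diff[OF _ xy, of "\<lambda>w. z w - y w"] by auto
  then show "cl x = cl y" unfolding qcls_altdef by blast
qed

lemma qrep_qcls:
  assumes x: "x \<in> alg_carrier W"
  shows "qrep (cl x) \<in> alg_carrier W" "(\<lambda>w. qrep (cl x) w - x w) \<in> J"
proof -
  have "qrep (cl x) \<in> cl x"
    unfolding qrep_def using qcls_self[OF x] by (rule someI[where P = "\<lambda>z. z \<in> cl x"])
  then show "qrep (cl x) \<in> alg_carrier W" "(\<lambda>w. qrep (cl x) w - x w) \<in> J"
    unfolding qcls_altdef by auto
qed

lemma quot_carrier: "alg_carrier Q = cl ` alg_carrier W"
  and quot_zero: "alg_zero Q = cl (alg_zero W)"
  and quot_one: "alg_one Q = cl (alg_one W)"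
  by (simp_all add: quot_alg_def del: word_alg_simps)

text \<open>The quotient operations are computed on arbitrary representatives, not only on \<open>qrep\<close>.\<close>
lemma quot_add:
  assumes x: "x \<in> alg_carrier W" and y: "y \<in> alg_carrier W"
  shows "alg_add Q (cl x) (cl y) = cl (alg_add W x y)"
proof -
  let ?a = "qrep (cl x)" and ?b = "qrep (cl y)"
  have "(\<lambda>w. (?a w - x w) + (?b w - y w)) \<in> J" using ideal_add qrep_qcls(2) x y by blast
  then have "cl (alg_add W ?a ?b) = cl (alg_add W x y)"
    using qcls_eq_iff[OF word_alg_add_closed[OF qrep_qcls(1)[OF x] qrep_qcls(1)[OF y]] word_alg_add_closed[OF x y]]
    by (simp add: algebra_simps)
  then show ?thesis by (simp add: quot_alg_def)
qed

lemma quot_smult: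
  assumes x: "x \<in> alg_carrier W"
  shows "alg_smult Q c (cl x) = cl (alg_smult W c x)"
proof -
  let ?a = "qrep (cl x)"
  have "(\<lambda>w. c * (?a w - x w)) \<in> J" using ideal_smult qrep_qcls(2) x by blast
  then have "cl (alg_smult W c ?a) = cl (alg_smult W c x)"
    using qcls_eq_iff[OF word_alg_smult_closed[OF qrep_qcls(1)[OF x]] word_alg_smult_closed[OF x]]
    by (simp add: algebra_simps)
  then show ?thesis by (simp add: quot_alg_def)
qed

lemma quot_mult:
  assumes x: "x \<in> alg_carrier W" and y: "y \<in> alg_carrier W"
  shows "alg_mult Q (cl x) (cl y) = cl (alg_mult W x y)"
proof -
  let ?a = "qrep (cl x)" and ?b = "qrep (cl y)"
  have a: "?a \<in> alg_carrier W" and b: "?b \<in> alg_carrier W" using qrep_qcls(1) x y by blast+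
  text \<open>\<open>a b - x y = (a - x) b + x (b - y)\<close>\<close>
  have "(\<lambda>w. alg_mult W (\<lambda>w. ?a w - x w) ?b w + alg_mult W x (\<lambda>w. ?b w - y w) w) \<in> J"
    using ideal_add[OF ideal_mult_right[OF b qrep_qcls(2)[OF x]] ideal_mult_left[OF x qrep_qcls(2)[OF y]]] .
  moreover have "(\<lambda>w. alg_mult W (\<lambda>w. ?a w - x w) ?b w + alg_mult W x (\<lambda>w. ?b w - y w) w)
      = (\<lambda>w. alg_mult W ?a ?b w - alg_mult W x y w)"
    by (simp add: fun_eq_iff algebra_simps sum_subtractf)
  ultimately have "cl (alg_mult W ?a ?b) = cl (alg_mult W x y)"
    using qcls_eq_iff[OF word_alg_mult_closed[OF a b] word_alg_mult_closed[OF x y]] by (simp del: word_alg_simps)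
  then show ?thesis by (simp add: quot_alg_def)
qed

lemma quot_cases:
  assumes "X \<in> alg_carrier Q"
  obtains x where "x \<in> alg_carrier W" "X = cl x"
  using assms quot_carrier by blast

lemma unital_algebra_quot: "unital_algebra Q"
proof -
  interpret W: unital_alg W by (rule unital_alg.intro[OF unital_algebra_word_alg])
  note closed = W.zero_closed W.one_closed W.add_closed W.mult_closed W.smult_closed
  note ops = quot_add quot_mult quot_smult quot_zero quot_one
  show ?thesis
    unfolding unital_algebra_def Let_def
  proof (intro conjI allI ballI)
    show "alg_zero Q \<in> alg_carrier Q" "alg_one Q \<in> alg_carrier Q"
      using quot_carrier quot_zero quot_one closed by auto
  next
    fix X Y Z assume "X \<in> alg_carrier Q" "Y \<in> alg_carrier Q" "Z \<in> alg_carrier Q"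
    then obtain x y z where x: "x \<in> alg_carrier W" "X = cl x" and y: "y \<in> alg_carrier W" "Y = cl y"
      and z: "z \<in> alg_carrier W" "Z = cl z"
      by (metis quot_cases)
    show "alg_add Q (alg_add Q X Y) Z = alg_add Q X (alg_add Q Y Z)"
      using x y z ops W.add_assoc closed by (simp del: word_alg_simps)
    show "alg_mult Q (alg_mult Q X Y) Z = alg_mult Q X (alg_mult Q Y Z)"
      using x y z ops W.mult_assoc closed by (simp del: word_alg_simps)
    show "alg_mult Q X (alg_add Q Y Z) = alg_add Q (alg_mult Q X Y) (alg_mult Q X Z)"
      using x y z ops W.distrib_left closed by (simp del: word_alg_simps)
    show "alg_mult Q (alg_add Q X Y) Z = alg_add Q (alg_mult Q X Z) (alg_mult Q Y Z)"
      using x y z ops W.distrib_right closed by (simp del: word_alg_simps)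
  next
    fix X Y assume "X \<in> alg_carrier Q" "Y \<in> alg_carrier Q"
    then obtain x y where x: "x \<in> alg_carrier W" "X = cl x" and y: "y \<in> alg_carrier W" "Y = cl y"
      by (metis quot_cases)
    show "alg_add Q X Y \<in> alg_carrier Q" "alg_mult Q X Y \<in> alg_carrier Q"
      using x y ops quot_carrier closed by (auto simp del: word_alg_simps)
    show "alg_add Q X Y = alg_add Q Y X" using x y ops W.add_commute by (simp del: word_alg_simps)
    fix c
    show "alg_smult Q c (alg_mult Q X Y) = alg_mult Q (alg_smult Q c X) Y"
      using x y ops W.smult_mult_left closed by (simp del: word_alg_simps)
    show "alg_smult Q c (alg_mult Q X Y) = alg_mult Q X (alg_smult Q c Y)"
      using x y ops W.smult_mult_right closed by (simp del: word_alg_simps)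
    show "alg_smult Q c (alg_add Q X Y) = alg_add Q (alg_smult Q c X) (alg_smult Q c Y)"
      using x y ops W.smult_add_right closed by (simp del: word_alg_simps)
  next
    fix c X assume "X \<in> alg_carrier Q"
    then obtain x where x: "x \<in> alg_carrier W" "X = cl x" by (metis quot_cases)
    show "alg_smult Q c X \<in> alg_carrier Q" using x ops quot_carrier closed by (auto simp del: word_alg_simps)
    fix d
    show "alg_smult Q (c + d) X = alg_add Q (alg_smult Q c X) (alg_smult Q d X)"
      using x ops W.smult_add_left closed by (simp del: word_alg_simps)
    show "alg_smult Q c (alg_smult Q d X) = alg_smult Q (c * d) X"
      using x ops W.smult_smult closed by (simp del: word_alg_simps)
  next
    fix X assume "X \<in> alg_carrier Q"
    then obtain x where x: "x \<in> alg_carrier W" "X = cl x" by (metis quot_cases)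
    show "alg_add Q (alg_zero Q) X = X" using x ops W.zero_add closed by (simp del: word_alg_simps)
    show "alg_add Q X (alg_smult Q (-1) X) = alg_zero Q"
      using x ops W.add_neg closed by (simp del: word_alg_simps)
    show "alg_smult Q 1 X = X" using x ops W.smult_one by (simp del: word_alg_simps)
    show "alg_mult Q (alg_one Q) X = X" using x ops W.one_mult closed by (simp del: word_alg_simps)
    show "alg_mult Q X (alg_one Q) = X" using x ops W.mult_one closed by (simp del: word_alg_simps)
  qed
qed

end

section \<open>Cofaces of the free product\<close>

definition avoids :: "nat \<Rightarrow> (nat \<times> 'b) list \<Rightarrow> bool" where
  "avoids k w \<longleftrightarrow> (\<forall>p\<in>set w. fst p \<noteq> k)"

text \<open>The coface \<open>\<delta>\<^sup>k\<close> on the word algebra: it renames the letters \<open>N \<mapsto> skip k N\<close>.\<close>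
definition word_coface ::
    "nat \<Rightarrow> ((nat \<times> 'b) list \<Rightarrow> complex) \<Rightarrow> ((nat \<times> 'b) list \<Rightarrow> complex)" where
  "word_coface k f = (\<lambda>w. if avoids k w then f (map (\<lambda>(N, b). (unskip k N, b)) w) else 0)"

lemma avoids_skip_unskip:
  "avoids k w \<Longrightarrow> map (\<lambda>(N, b). (skip k N, b)) (map (\<lambda>(N, b). (unskip k N, b)) w) = w"
  by (induction w) (auto simp: avoids_def skip_unskip)

lemma avoids_take_drop: "avoids k w \<longleftrightarrow> avoids k (take i w) \<and> avoids k (drop i w)"
proof -
  have "set w = set (take i w) \<union> set (drop i w)" by (metis append_take_drop_id set_append)
  then show ?thesis by (auto simp: avoids_def)
qed

lemma word_coface_closed:
  assumes f: "f \<in> alg_carrier (word_alg S)"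
  shows "word_coface k f \<in> alg_carrier (word_alg S)"
proof -
  let ?u = "map (\<lambda>(N, b). (unskip k N, b))" and ?s = "map (\<lambda>(N, b). (skip k N, b))"
  have "{w. word_coface k f w \<noteq> 0} \<subseteq> ?s ` {w. f w \<noteq> 0}"
  proof
    fix w assume "w \<in> {w. word_coface k f w \<noteq> 0}"
    then have "avoids k w" "f (?u w) \<noteq> 0" by (auto simp: word_coface_def split: if_splits)
    then show "w \<in> ?s ` {w. f w \<noteq> 0}" using avoids_skip_unskip[of k w] by (intro image_eqI[of _ _ "?u w"]) auto
  qed
  then have "finite {w. word_coface k f w \<noteq> 0}" using f by (auto simp: word_alg_carrier intro: finite_subset)
  moreover have "set (map snd w) \<subseteq> S" if "word_coface k f w \<noteq> 0" for w
  proof -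
    have "f (?u w) \<noteq> 0" using that by (auto simp: word_coface_def split: if_splits)
    then have "set (map snd (?u w)) \<subseteq> S" using word_alg_carrierD[OF f] by blast
    moreover have "map snd (?u w) = map snd w" by (induction w) auto
    ultimately show ?thesis by simp
  qed
  ultimately show ?thesis by (simp add: word_alg_carrier)
qed

lemma word_coface_letter: "word_coface k (letter N b) = letter (skip k N) b"
proof
  fix w :: "(nat \<times> 'a) list"
  show "word_coface k (letter N b) w = letter (skip k N) b w"
  proof (cases "avoids k w")
    case True
    have "map (\<lambda>(N, b). (unskip k N, b)) w = [(N, b)] \<longleftrightarrow> w = [(skip k N, b)]"
      using avoids_skip_unskip[OF True] by auto
    then show ?thesis using True by (simp add: word_coface_def letter_def)
  next
    case False
    moreover have "avoids k [(skip k N, b)]" by (simp add: avoids_def)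
    ultimately have "w \<noteq> [(skip k N, b)]" by blast
    then show ?thesis using False by (simp add: word_coface_def letter_def)
  qed
qed

lemma word_coface_add: "word_coface k (\<lambda>w. f w + g w) = (\<lambda>w. word_coface k f w + word_coface k g w)"
  by (auto simp: word_coface_def)

lemma word_coface_diff: "word_coface k (\<lambda>w. f w - g w) = (\<lambda>w. word_coface k f w - word_coface k g w)"
  by (auto simp: word_coface_def)

lemma word_coface_smult: "word_coface k (\<lambda>w. c * f w) = (\<lambda>w. c * word_coface k f w)"
  by (auto simp: word_coface_def)

lemma word_coface_one: "word_coface k (\<lambda>w. if w = [] then 1 else 0) = (\<lambda>w. if w = [] then 1 else 0)"
  by (auto simp: word_coface_def avoids_def)

lemma word_coface_mult: "word_coface k (\<lambda>w. \<Sum>i\<le>length w. f (take i w) * g (drop i w))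
    = (\<lambda>w. \<Sum>i\<le>length w. word_coface k f (take i w) * word_coface k g (drop i w))"
proof
  fix w :: "(nat \<times> 'a) list"
  show "word_coface k (\<lambda>w. \<Sum>i\<le>length w. f (take i w) * g (drop i w)) w
    = (\<Sum>i\<le>length w. word_coface k f (take i w) * word_coface k g (drop i w))"
  proof (cases "avoids k w")
    case True
    then show ?thesis using avoids_take_drop[of k w] by (simp add: word_coface_def take_map drop_map)
  next
    case False
    then have "word_coface k f (take i w) * word_coface k g (drop i w) = 0" for i
      using avoids_take_drop[of k w] by (auto simp: word_coface_def)
    then have "(\<Sum>i\<le>length w. word_coface k f (take i w) * word_coface k g (drop i w)) = 0"
      by (intro sum.neutral ballI)
    then show ?thesis using False by (simp add: word_coface_def)
  qed
qed

lemma unital_hom_word_coface: "unital_hom (word_alg S) (word_alg S) (word_coface k)"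
  unfolding unital_hom_def
  by (simp add: word_coface_closed word_coface_add word_coface_smult word_coface_mult word_coface_one)

lemma letter_closed: "b \<in> S \<Longrightarrow> letter N b \<in> alg_carrier (word_alg S)"
proof -
  assume b: "b \<in> S"
  have "{w. letter N b w \<noteq> 0} = {[(N, b)]}" by (auto simp: letter_def)
  then show ?thesis using b by (simp add: word_alg_carrier letter_def)
qed

lemma fp_rels_closed:
  assumes "unital_algebra B"
  shows "fp_rels B \<subseteq> alg_carrier (word_alg (alg_carrier B))"
proof -
  interpret B: unital_alg B by (rule unital_alg.intro[OF assms])
  interpret W: unital_alg "word_alg (alg_carrier B)" by (rule unital_alg.intro[OF unital_algebra_word_alg])
  show ?thesis
    unfolding fp_rels_def Let_def alg_sub_def
    by (auto intro!: W.add_closed W.smult_closed W.mult_closed W.one_closed letter_closed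
        B.add_closed B.smult_closed B.mult_closed B.one_closed simp del: word_alg_simps)
qed

locale free_product =
  fixes B :: "'b alg"
  assumes unital_B: "unital_algebra B"
begin

abbreviation "F \<equiv> free_prod B"

sublocale word_quotient "alg_carrier B" "gen_ideal (word_alg (alg_carrier B)) (fp_rels B)"
  by (rule word_quotient.intro, rule unital_alg.alg_ideal_gen_ideal[OF unital_alg.intro])
    (use unital_algebra_word_alg fp_rels_closed[OF unital_B] in auto)

lemma free_prod_eq: "F = Q"
  by (simp add: free_prod_def)

lemma unital_algebra_free_prod: "unital_algebra F"
  using unital_algebra_quot free_prod_eq by simp

lemma fp_emb_eq: "fp_emb B N b = cl (letter N b)"
  by (simp add: fp_emb_def)

lemma fp_emb_closed: "b \<in> alg_carrier B \<Longrightarrow> fp_emb B N b \<in> alg_carrier F"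
  unfolding free_prod_eq fp_emb_eq quot_carrier by (rule imageI[OF letter_closed])

lemma word_coface_fp_rels:
  assumes r: "r \<in> fp_rels B"
  shows "word_coface k r \<in> fp_rels B"
  using r[unfolded fp_rels_def Let_def]
proof (elim UnE CollectE exE conjE)
  fix N b b' assume r: "r = alg_sub W (letter N (alg_add B b b')) (alg_add W (letter N b) (letter N b'))"
    and b: "b \<in> alg_carrier B" "b' \<in> alg_carrier B"
  have "word_coface k r = alg_sub W (letter (skip k N) (alg_add B b b'))
      (alg_add W (letter (skip k N) b) (letter (skip k N) b'))"
    unfolding r word_alg_sub word_alg_simps by (simp only: word_coface_diff word_coface_add word_coface_letter)
  then show ?thesis unfolding fp_rels_def Let_def using b by blast
next
  fix N c b assume r: "r = alg_sub W (letter N (alg_smult B c b)) (alg_smult W c (letter N b))"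
    and b: "b \<in> alg_carrier B"
  have "word_coface k r = alg_sub W (letter (skip k N) (alg_smult B c b)) (alg_smult W c (letter (skip k N) b))"
    unfolding r word_alg_sub word_alg_simps by (simp only: word_coface_diff word_coface_smult word_coface_letter)
  then show ?thesis unfolding fp_rels_def Let_def using b by blast
next
  fix N b b' assume r: "r = alg_sub W (letter N (alg_mult B b b')) (alg_mult W (letter N b) (letter N b'))"
    and b: "b \<in> alg_carrier B" "b' \<in> alg_carrier B"
  have "word_coface k r = alg_sub W (letter (skip k N) (alg_mult B b b'))
      (alg_mult W (letter (skip k N) b) (letter (skip k N) b'))"
    unfolding r word_alg_sub word_alg_simps by (simp only: word_coface_diff word_coface_mult word_coface_letter)
  then show ?thesis unfolding fp_rels_def Let_def using b by blast
next
  fix N assume r: "r = alg_sub W (letter N (alg_one B)) (alg_one W)"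
  have "word_coface k r = alg_sub W (letter (skip k N) (alg_one B)) (alg_one W)"
    unfolding r word_alg_sub word_alg_simps by (simp only: word_coface_diff word_coface_one word_coface_letter)
  then show ?thesis unfolding fp_rels_def Let_def by blast
qed

lemma word_coface_ideal: "x \<in> gen_ideal W (fp_rels B) \<Longrightarrow> word_coface k x \<in> gen_ideal W (fp_rels B)"
  by (rule unital_alg.unital_hom_gen_ideal[OF unital_alg.intro[OF unital_algebra_word_alg]
        unital_hom_word_coface fp_rels_closed[OF unital_B]])
    (use word_coface_fp_rels in blast)

definition fp_coface :: "nat \<Rightarrow> ((nat \<times> 'b) list \<Rightarrow> complex) set \<Rightarrow> ((nat \<times> 'b) list \<Rightarrow> complex) set" where
  "fp_coface k X = cl (word_coface k (qrep X))"

lemma fp_coface_qcls: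
  assumes x: "x \<in> alg_carrier W"
  shows "fp_coface k (cl x) = cl (word_coface k x)"
proof -
  have "word_coface k (\<lambda>w. qrep (cl x) w - x w) \<in> gen_ideal W (fp_rels B)"
    using word_coface_ideal[OF qrep_qcls(2)[OF x]] .
  then show ?thesis
    unfolding fp_coface_def word_coface_diff
    using qcls_eq_iff[OF word_coface_closed[OF qrep_qcls(1)[OF x]] word_coface_closed[OF x]] by simp
qed

lemma unital_hom_fp_coface: "unital_hom F F (fp_coface k)"
  unfolding unital_hom_def free_prod_eq
proof (intro conjI ballI allI)
  fix X Y assume "X \<in> alg_carrier Q" "Y \<in> alg_carrier Q"
  then obtain x y where x: "x \<in> alg_carrier W" "X = cl x" and y: "y \<in> alg_carrier W" "Y = cl y"
    by (metis quot_cases)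
  note hom = unital_homD[OF unital_hom_word_coface]
  show "fp_coface k X \<in> alg_carrier Q"
    unfolding x(2) fp_coface_qcls[OF x(1)] quot_carrier using word_coface_closed[OF x(1)] by (rule imageI)
  show "fp_coface k (alg_add Q X Y) = alg_add Q (fp_coface k X) (fp_coface k Y)"
    using x y by (simp add: hom quot_add fp_coface_qcls word_alg_add_closed word_coface_closed del: word_alg_simps)
  show "fp_coface k (alg_mult Q X Y) = alg_mult Q (fp_coface k X) (fp_coface k Y)"
    using x y by (simp add: hom quot_mult fp_coface_qcls word_alg_mult_closed word_coface_closed del: word_alg_simps)
  fix c
  show "fp_coface k (alg_smult Q c X) = alg_smult Q c (fp_coface k X)"
    using x by (simp add: hom quot_smult fp_coface_qcls word_alg_smult_closed word_coface_closed del: word_alg_simps)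
next
  show "fp_coface k (alg_one Q) = alg_one Q"
    unfolding quot_one fp_coface_qcls[OF word_alg_one_closed] unital_homD(5)[OF unital_hom_word_coface] ..
qed

lemma fp_coface_emb: "fp_coface k (fp_emb B N b) = fp_emb B (skip k N) b" if "b \<in> alg_carrier B"
  using that fp_emb_eq fp_coface_qcls letter_closed word_coface_letter by metis

end

section \<open>Spreadability and the free product SCO\<close>

lemma (in unital_alg) lincomb_in_subalg:
  assumes C: "subalg A C" and gen: "gen ` G \<subseteq> C"
  shows "words_in G cs \<Longrightarrow> lincomb A gen cs \<in> C"
proof (induction cs)
  case (Cons p cs)
  have "set (map gen (snd p)) \<subseteq> C" using Cons.prems gen by (cases p) auto
  then have "mprod A (map gen (snd p)) \<in> C"
    using C by (induction "map gen (snd p)" arbitrary: p) (auto simp: subalg_def mprod_def)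
  then show ?case using Cons C by (cases p) (simp add: subalg_def)
qed (use C in \<open>simp add: subalg_def\<close>)

lemma unital_hom_lincomb_eq:
  assumes f: "unital_hom X Y f" and g: "unital_hom X Y g" and X: "unital_algebra X" and Y: "unital_algebra Y"
    and gen: "gen ` G \<subseteq> alg_carrier X" and cs: "words_in G cs"
    and eq: "\<And>a. a \<in> G \<Longrightarrow> f (gen a) = g (gen a)"
  shows "f (lincomb X gen cs) = g (lincomb X gen cs)"
proof -
  have "f (lincomb X gen cs) = lincomb Y (f \<circ> gen) cs" using unital_hom_lincomb[OF f X Y gen cs] .
  also have "\<dots> = lincomb Y (g \<circ> gen) cs" using eq by (intro lincomb_cong[OF cs]) simp
  also have "\<dots> = g (lincomb X gen cs)" using unital_hom_lincomb[OF g X Y gen cs] by simp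
  finally show ?thesis .
qed

definition shift_words :: "nat \<Rightarrow> (complex \<times> (nat \<times> 'b) list) list \<Rightarrow> (complex \<times> (nat \<times> 'b) list) list" where
  "shift_words k cs = map (\<lambda>(c, w). (c, map (\<lambda>(N, b). (skip k N, b)) w)) cs"

locale fp_representation = free_product B for B :: "'b alg" +
  fixes A :: "'d alg" and \<phi> and \<iota> :: "nat \<Rightarrow> 'b \<Rightarrow> 'd" and \<pi>
  assumes ncps_A: "ncps A \<phi>"
    and pi_hom: "unital_hom (free_prod B) A \<pi>"
    and pi_emb: "b \<in> alg_carrier B \<Longrightarrow> \<pi> (fp_emb B N b) = \<iota> N b"
begin

abbreviation "letters n \<equiv> {(N, b). N \<le> n \<and> b \<in> alg_carrier B}"
abbreviation "emb \<equiv> \<lambda>(N, b). fp_emb B N b"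
abbreviation "Af n \<equiv> restr_alg F (subalg_gen F (\<Union>N\<in>{..n}. fp_emb B N ` alg_carrier B))"
abbreviation "An n \<equiv> restr_alg A (subalg_gen A (\<Union>N\<in>{..n}. \<iota> N ` alg_carrier B))"

definition fp_cofaces :: "(nat \<Rightarrow> nat \<Rightarrow> ((nat \<times> 'b) list \<Rightarrow> complex) set \<Rightarrow> ((nat \<times> 'b) list \<Rightarrow> complex) set) \<Rightarrow> bool" where
  "fp_cofaces d \<longleftrightarrow> (\<forall>n k. 1 \<le> n \<longrightarrow> k \<le> n \<longrightarrow>
     unital_hom (Af (n - 1)) (Af n) (d n k) \<and>
     (\<forall>N b. N \<le> n - 1 \<longrightarrow> b \<in> alg_carrier B \<longrightarrow> d n k (fp_emb B N b) = fp_emb B (skip k N) b))"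

lemma emb_letters: "emb ` letters n = (\<Union>N\<in>{..n}. fp_emb B N ` alg_carrier B)"
  by auto

lemma emb_letters_closed: "emb ` letters n \<subseteq> alg_carrier F"
  using fp_emb_closed by auto

lemma Af_carrier: "alg_carrier (Af n) = subalg_gen F (emb ` letters n)"
  unfolding restr_alg_def emb_letters by simp

lemma subalg_Af: "subalg F (alg_carrier (Af n))"
  unfolding Af_carrier
  by (rule unital_alg.subalg_subalg_gen[OF unital_alg.intro[OF unital_algebra_free_prod] emb_letters_closed])

lemma unital_algebra_Af: "unital_algebra (Af n)"
  using unital_alg.unital_algebra_restr[OF unital_alg.intro[OF unital_algebra_free_prod] subalg_Af]
  by (simp add: restr_alg_def)

lemma emb_letters_Af: "emb ` letters n \<subseteq> alg_carrier (Af n)"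
  unfolding Af_carrier by (rule subalg_gen_incl)

lemma fp_emb_Af: "N \<le> n \<Longrightarrow> b \<in> alg_carrier B \<Longrightarrow> fp_emb B N b \<in> alg_carrier (Af n)"
  using emb_letters_Af[of n] by blast

lemma fp_cofacesD:
  assumes "fp_cofaces d" "1 \<le> n" "k \<le> n"
  shows "unital_hom (Af (n - 1)) (Af n) (d n k)"
    and "N \<le> n - 1 \<Longrightarrow> b \<in> alg_carrier B \<Longrightarrow> d n k (fp_emb B N b) = fp_emb B (skip k N) b"
  using assms unfolding fp_cofaces_def by auto

lemma Af_lincomb:
  assumes "x \<in> alg_carrier (Af n)"
  obtains cs where "words_in (letters n) cs" "x = lincomb F emb cs"
  using unital_alg.subalg_gen_lincomb[OF unital_alg.intro[OF unital_algebra_free_prod] emb_letters_closed]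
    assms[unfolded Af_carrier] that
  by blast

lemma ncps_Af: "ncps (Af n) (\<phi> \<circ> \<pi>)"
proof -
  have "x \<in> alg_carrier (Af n) \<Longrightarrow> x \<in> alg_carrier F" for x
    using subalg_Af[of n] unfolding subalg_def by blast
  then show ?thesis
    using unital_algebra_Af ncps_A unital_homD[OF pi_hom]
    unfolding ncps_def by (simp add: restr_alg_def)
qed

lemma pi_mprod: "set (map snd ws) \<subseteq> alg_carrier B \<Longrightarrow>
    \<pi> (mprod F (map emb ws)) = mprod A (map (\<lambda>(N, b). \<iota> N b) ws)"
proof -
  assume ws: "set (map snd ws) \<subseteq> alg_carrier B"
  have "set (map emb ws) \<subseteq> alg_carrier F" using ws fp_emb_closed by auto
  then have "\<pi> (mprod F (map emb ws)) = mprod A (map \<pi> (map emb ws))"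
    using unital_hom_mprod[OF pi_hom unital_algebra_free_prod] by simp
  also have "map \<pi> (map emb ws) = map (\<lambda>(N, b). \<iota> N b) ws" using ws pi_emb by auto
  finally show ?thesis .
qed

lemma state_lincomb: "words_in (letters n) cs \<Longrightarrow>
    \<phi> (\<pi> (lincomb F emb cs)) = (\<Sum>(c, w)\<leftarrow>cs. c * \<phi> (mprod A (map (\<lambda>(N, b). \<iota> N b) w)))"
proof -
  assume cs: "words_in (letters n) cs"
  have alg_A: "unital_algebra A" using ncps_A by (simp add: ncps_def)
  have \<iota>: "(\<lambda>(N, b). \<iota> N b) ` letters n \<subseteq> alg_carrier A"
    using unital_homD(1)[OF pi_hom] fp_emb_closed pi_emb by force
  have "\<pi> (lincomb F emb cs) = lincomb A (\<pi> \<circ> emb) cs"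
    using unital_hom_lincomb[OF pi_hom unital_algebra_free_prod alg_A emb_letters_closed cs] .
  also have "\<dots> = lincomb A (\<lambda>(N, b). \<iota> N b) cs"
    using pi_emb by (intro lincomb_cong[OF cs]) auto
  finally show ?thesis
    using unital_alg.linear_lincomb[OF unital_alg.intro[OF alg_A] \<iota>, of \<phi> cs] ncps_A cs
    by (simp add: ncps_def)
qed

lemma words_in_shift_words:
  "1 \<le> n \<Longrightarrow> words_in (letters (n - 1)) cs \<Longrightarrow> words_in (letters n) (shift_words k cs)"
  by (force simp: words_in_def shift_words_def skip_def)

lemma coface_lincomb:
  assumes f: "unital_hom (Af (n - 1)) (Af n) f"
    and gens: "\<And>N b. N \<le> n - 1 \<Longrightarrow> b \<in> alg_carrier B \<Longrightarrow> f (fp_emb B N b) = fp_emb B (skip k N) b"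
    and cs: "words_in (letters (n - 1)) cs"
  shows "f (lincomb F emb cs) = lincomb F emb (shift_words k cs)"
proof -
  have "f (lincomb (Af (n - 1)) emb cs) = lincomb (Af n) (f \<circ> emb) cs"
    using unital_hom_lincomb[OF f unital_algebra_Af unital_algebra_Af emb_letters_Af cs] .
  also have "\<dots> = lincomb F (emb \<circ> (\<lambda>(N, b). (skip k N, b))) cs"
    unfolding lincomb_restr by (rule lincomb_cong[OF cs]) (use gens in auto)
  finally show ?thesis by (simp add: lincomb_comp shift_words_def)
qed

lemma fp_cofaces_fp_coface: "fp_cofaces (\<lambda>n k. fp_coface k)"
  unfolding fp_cofaces_def
proof (intro allI impI conjI)
  fix n k :: nat assume n: "1 \<le> n" and k: "k \<le> n"
  have maps: "fp_coface k x \<in> alg_carrier (Af n)" if x: "x \<in> alg_carrier (Af (n - 1))" for x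
  proof -
    obtain cs where cs: "words_in (letters (n - 1)) cs" and x: "x = lincomb F emb cs"
      using Af_lincomb[OF x] .
    have "fp_coface k x = lincomb F (fp_coface k \<circ> emb) cs"
      using unital_hom_lincomb[OF unital_hom_fp_coface unital_algebra_free_prod unital_algebra_free_prod
          emb_letters_closed cs] x by simp
    also have "\<dots> = lincomb F emb (shift_words k cs)"
      using fp_coface_emb by (auto intro!: lincomb_cong[OF cs] simp: lincomb_comp[symmetric] shift_words_def)
    finally show ?thesis
      using unital_alg.lincomb_in_subalg[OF unital_alg.intro[OF unital_algebra_free_prod] subalg_Af
          emb_letters_Af words_in_shift_words[OF n cs]] by simp
  qed
  show "unital_hom (Af (n - 1)) (Af n) (fp_coface k)"
    using maps unital_homD[OF unital_hom_fp_coface] subalg_Af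
    unfolding unital_hom_def by (simp add: restr_alg_def subalg_def subset_iff)
  fix N b assume "N \<le> n - 1" "b \<in> alg_carrier B"
  then show "fp_coface k (fp_emb B N b) = fp_emb B (skip k N) b" by (simp add: fp_coface_emb)
qed

lemma fp_cofaces_state:
  assumes sp: "spreadable B A \<phi> \<iota>" and d: "fp_cofaces d" and n: "1 \<le> n" and k: "k \<le> n"
    and x: "x \<in> alg_carrier (Af (n - 1))"
  shows "\<phi> (\<pi> (d n k x)) = \<phi> (\<pi> x)"
proof -
  obtain cs where cs: "words_in (letters (n - 1)) cs" and x: "x = lincomb F emb cs"
    using Af_lincomb[OF x] .
  have "d n k x = lincomb F emb (shift_words k cs)"
    using coface_lincomb[OF fp_cofacesD(1)[OF d n k] fp_cofacesD(2)[OF d n k] cs] x by simp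
  then have "\<phi> (\<pi> (d n k x)) = (\<Sum>(c, w)\<leftarrow>shift_words k cs. c * \<phi> (mprod A (map (\<lambda>(N, b). \<iota> N b) w)))"
    using state_lincomb[OF words_in_shift_words[OF n cs]] by simp
  also have "\<dots> = (\<Sum>(c, w)\<leftarrow>cs. c * \<phi> (mprod A (map (\<lambda>(N, b). \<iota> N b) w)))"
  proof -
    have "\<phi> (mprod A (map (\<lambda>(N, b). \<iota> (skip k N) b) w)) = \<phi> (mprod A (map (\<lambda>(N, b). \<iota> N b) w))"
      if "(c, w) \<in> set cs" for c w
      using sp strict_mono_skip[of k] cs that unfolding spreadable_def words_in_def by fastforce
    then have "map (\<lambda>(c, w). c * \<phi> (mprod A (map (\<lambda>(N, b). \<iota> N b) w))) (shift_words k cs)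
        = map (\<lambda>(c, w). c * \<phi> (mprod A (map (\<lambda>(N, b). \<iota> N b) w))) cs"
      unfolding shift_words_def by (auto simp: comp_def case_prod_unfold)
    then show ?thesis by simp
  qed
  also have "\<dots> = \<phi> (\<pi> x)" using state_lincomb[OF cs] x by simp
  finally show ?thesis .
qed

lemma fp_cofaces_cosimplicial:
  assumes d: "fp_cofaces d" and n: "1 \<le> n" and ij: "i < j" "j \<le> n + 1"
    and x: "x \<in> alg_carrier (Af (n - 1))"
  shows "d (n + 1) j (d n i x) = d (n + 1) i (d n (j - 1) x)"
proof -
  obtain cs where cs: "words_in (letters (n - 1)) cs" and x: "x = lincomb F emb cs"
    using Af_lincomb[OF x] .
  have n': "1 \<le> n + 1" by simp
  have lower: "unital_hom (Af (n - 1)) (Af n) (d n i)" "unital_hom (Af (n - 1)) (Af n) (d n (j - 1))"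
    using fp_cofacesD(1)[OF d n] ij by auto
  have upper: "unital_hom (Af n) (Af (n + 1)) (d (n + 1) j)" "unital_hom (Af n) (Af (n + 1)) (d (n + 1) i)"
    using fp_cofacesD(1)[OF d n', of j] fp_cofacesD(1)[OF d n', of i] ij by auto
  have "(d (n + 1) j \<circ> d n i) (emb a) = (d (n + 1) i \<circ> d n (j - 1)) (emb a)" if a: "a \<in> letters (n - 1)" for a
  proof -
    obtain N b where a: "a = (N, b)" "N \<le> n - 1" "b \<in> alg_carrier B" using a by (cases a) auto
    have "skip i N \<le> n" "skip (j - 1) N \<le> n" using a(2) n by (simp_all add: skip_le)
    then show ?thesis
      using a ij fp_cofacesD(2)[OF d n] fp_cofacesD(2)[OF d n'] skip_skip[OF ij(1)] by auto
  qed
  then have "(d (n + 1) j \<circ> d n i) (lincomb (Af (n - 1)) emb cs)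
      = (d (n + 1) i \<circ> d n (j - 1)) (lincomb (Af (n - 1)) emb cs)"
    by (intro unital_hom_lincomb_eq[OF unital_hom_comp[OF lower(1) upper(1)] unital_hom_comp[OF lower(2) upper(2)]
          unital_algebra_Af unital_algebra_Af emb_letters_Af cs])
  then show ?thesis using x by simp
qed

lemma spreadable_imp_sco: "spreadable B A \<phi> \<iota> \<Longrightarrow> fp_cofaces d \<Longrightarrow> sco Af (\<lambda>n. \<phi> \<circ> \<pi>) d"
  unfolding sco_def ncps_mor_def
  using ncps_Af fp_cofaces_state fp_cofaces_cosimplicial
  by (auto simp: fp_cofaces_def)

lemma sco_imp_spreadable:
  assumes d: "fp_cofaces d" and sco: "sco Af (\<lambda>n. \<phi> \<circ> \<pi>) d"
  shows "spreadable B A \<phi> \<iota>"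
proof (rule tracked_cofaces.spreadable_if_moments)
  show "tracked_cofaces Af (\<lambda>n. \<phi> \<circ> \<pi>) d B (\<lambda>n N b. fp_emb B N b)"
    using sco d fp_emb_Af unfolding sco_def fp_cofaces_def by unfold_locales auto
  fix n and ws :: "(nat \<times> 'b) list"
  assume "set (map snd ws) \<subseteq> alg_carrier B"
  then show "\<phi> (mprod A (map (\<lambda>(N, b). \<iota> N b) ws)) = (\<phi> \<circ> \<pi>) (mprod (Af n) (map (\<lambda>(N, b). fp_emb B N b) ws))"
    using pi_mprod by (simp add: mprod_def restr_alg_def)
qed

lemma image_sco_imp_spreadable:
  assumes gens: "\<forall>n k. 1 \<le> n \<longrightarrow> k \<le> n \<longrightarrow>
      (\<forall>N b. N \<le> n - 1 \<longrightarrow> b \<in> alg_carrier B \<longrightarrow> d n k (\<iota> N b) = \<iota> (skip k N) b)"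
    and sco: "sco An (\<lambda>n. \<phi>) d"
  shows "spreadable B A \<phi> \<iota>"
proof (rule tracked_cofaces.spreadable_if_moments)
  show "tracked_cofaces An (\<lambda>n. \<phi>) d B (\<lambda>n N b. \<iota> N b)"
  proof
    fix n N :: nat and b assume "N \<le> n" "b \<in> alg_carrier B"
    then show "\<iota> N b \<in> alg_carrier (An n)" using subalg_gen_incl by (force simp: restr_alg_def)
  qed (use sco gens in \<open>auto simp: sco_def\<close>)
qed (simp add: mprod_def restr_alg_def)

end

theorem mainTheorem5:
  shows
  "(\<forall>(A :: nat \<Rightarrow> 'a alg) \<phi> \<delta> (L :: 'c alg) \<psi> \<mu> \<alpha>0.
      sco A \<phi> \<delta> \<longrightarrow>
      is_inductive_limit A \<phi> \<delta> L \<psi> \<mu> \<longrightarrow>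
      ncps_mor L \<psi> L \<psi> \<alpha>0 \<longrightarrow>
      (\<forall>n. 1 \<le> n \<longrightarrow> (\<forall>x\<in>alg_carrier (A (n - 1)). \<alpha>0 (\<mu> (n - 1) x) = \<mu> n (\<delta> n 0 x))) \<longrightarrow>
      spreadable (A 0) L \<psi> (\<lambda>N. (\<alpha>0 ^^ N) \<circ> \<mu> 0))
   \<and>
   (\<forall>(B :: 'b alg) (A :: 'd alg) \<phi> \<iota> \<pi>.
      unital_algebra B \<longrightarrow>
      ncps A \<phi> \<longrightarrow>
      (\<forall>N. unital_hom B A (\<iota> N)) \<longrightarrow>
      unital_hom (free_prod B) A \<pi> \<longrightarrow>
      (\<forall>N. \<forall>b\<in>alg_carrier B. \<pi> (fp_emb B N b) = \<iota> N b) \<longrightarrow>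
      (let
         Af = (\<lambda>n. restr_alg (free_prod B)
                 (subalg_gen (free_prod B) (\<Union>N\<in>{..n}. fp_emb B N ` alg_carrier B)));
         \<phi>f = (\<lambda>n. \<phi> \<circ> \<pi>);
         An = (\<lambda>n. restr_alg A (subalg_gen A (\<Union>N\<in>{..n}. \<iota> N ` alg_carrier B)));
         \<phi>n = (\<lambda>n. \<phi>);
         sh = (\<lambda>k N :: nat. if N < k then N else N + 1);
         cond_a = spreadable B A \<phi> \<iota>;
         homs_f = (\<lambda>d. \<forall>n k. 1 \<le> n \<longrightarrow> k \<le> n \<longrightarrow>
                     unital_hom (Af (n - 1)) (Af n) (d n k) \<and>
                     (\<forall>N b. N \<le> n - 1 \<longrightarrow> b \<in> alg_carrier B \<longrightarrow>
                        d n k (fp_emb B N b) = fp_emb B (sh k N) b));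
         cond_b = ((\<exists>d. homs_f d) \<and> (\<forall>d. homs_f d \<longrightarrow> sco Af \<phi>f d));
         cond_c = (\<exists>d. (\<forall>n k. 1 \<le> n \<longrightarrow> k \<le> n \<longrightarrow>
                        (\<forall>N b. N \<le> n - 1 \<longrightarrow> b \<in> alg_carrier B \<longrightarrow>
                           d n k (\<iota> N b) = \<iota> (sh k N) b)) \<and>
                       sco An \<phi>n d)
       in (cond_a \<longleftrightarrow> cond_b) \<and> (cond_c \<longrightarrow> cond_a)))"
  apply (intro conjI allI impI)
  subgoal premises prems for A \<phi> \<delta> L \<psi> \<mu> \<alpha>0
    using prems by (intro sco_limit.spreadable[of A \<phi> \<delta>]) (simp add: sco_limit_def)
  subgoal premises prems for B A \<phi> \<iota> \<pi>
  proof -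
    interpret fp_representation B A \<phi> \<iota> \<pi>
      using prems by unfold_locales auto
    show ?thesis
      unfolding Let_def skip_def[symmetric] fp_cofaces_def[symmetric]
      using fp_cofaces_fp_coface spreadable_imp_sco sco_imp_spreadable image_sco_imp_spreadable by blast
  qed
  done

end
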